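(* Let $d\ge1$, $s\in(0,1)$, $0<\lambda\le\Lambda$ and $M\ge0$. There exists $\delta>0$, depending only on $d,s,\lambda,\Lambda,M$, with the following property. Let $R>0$, let $K:\mathbb{R}^d\to\mathbb{R}$ be a measurable kernel satisfying $\lambda|y|^{-d-s}\le K(y)\le\Lambda|y|^{-d-s}$ and $K(y)=K(-y)$ for all $y\neq0$, and let $E\subset\mathbb{R}^d$ be a Borel set whose topological boundary $\partial E$ has Lebesgue measure zero and with $0\in\partial E$. If $H_{K,E}\le MR^{-s}$ in $B_{R/2}$ in the viscosity sense, then \[ |E\cap B_R|\ge\delta\,|B_R|. \]
   Context: $B_\rho(x)$ is the open ball of radius $\rho$ centred at $x$, $B_\rho=B_\rho(0)$, and $|F|$ denotes Lebesgue measure. Sets are not identified up to null sets, and $\partial E$ is the topological boundary. Put $\tilde\chi_E=\chi_{\mathbb{R}^d\setminus E}-\chi_E$. The nonlocal mean curvature of $E$ at $x\in\partial E$ is \[ H_{K,E}(x)=\lim_{\varepsilon\to0^+}\int_{\mathbb{R}^d\setminus B_\varepsilon(x)}\tilde\chi_E(y)K(x-y)\,dy, \] whenever the limit exists (possibly $+\infty$). At any $x\in\partial E$ admitting an exterior touching ball this limit exists in $(-\infty,+\infty]$. For an open set $\Omega$ and $C_0\in\mathbb{R}$, "$H_{K,E}\le C_0$ in $\Omega$ in the viscosity sense" means the following. Take any $x\in\partial E\cap\Omega$ for which there is an open ball $B\subset\mathbb{R}^d\setminus E$ with $x\in\partial B$. At every such $x$ one has $H_{K,E}(x)\le C_0$.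 *)

theory Defs
  imports "HOL-Analysis.Analysis"
begin

definition tchi :: "'a set \<Rightarrow> 'a \<Rightarrow> real" where
  "tchi E y = (if y \<in> E then -1 else 1)"

definition trunc_curv :: "('a::euclidean_space \<Rightarrow> real) \<Rightarrow> 'a set \<Rightarrow> 'a \<Rightarrow> real \<Rightarrow> real" where
  "trunc_curv K E x \<epsilon> =
     integral\<^sup>L lebesgue (\<lambda>y. indicator (UNIV - ball x \<epsilon>) y * (tchi E y * K (x - y)))"

text \<open>Nonlocal mean curvature: limit as eps -> 0+ in the extended reals (possibly +infinity).\<close>
definition nonlocal_curv :: "('a::euclidean_space \<Rightarrow> real) \<Rightarrow> 'a set \<Rightarrow> 'a \<Rightarrow> ereal" where
  "nonlocal_curv K E x = Lim (at_right 0) (\<lambda>\<epsilon>. ereal (trunc_curv K E x \<epsilon>))"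

definition ext_touching_ball :: "'a::euclidean_space set \<Rightarrow> 'a \<Rightarrow> bool" where
  "ext_touching_ball E x \<longleftrightarrow> (\<exists>c r. r > 0 \<and> ball c r \<subseteq> UNIV - E \<and> x \<in> frontier (ball c r))"

definition visc_curv_le :: "('a::euclidean_space \<Rightarrow> real) \<Rightarrow> 'a set \<Rightarrow> 'a set \<Rightarrow> real \<Rightarrow> bool" where
  "visc_curv_le K E \<Omega> C0 \<longleftrightarrow>
     (\<forall>x \<in> frontier E \<inter> \<Omega>. ext_touching_ball E x \<longrightarrow> nonlocal_curv K E x \<le> ereal C0)"

end

theory Submission
  imports Defs
begin

text \<open>
  Take \<open>z\<close> in \<open>B(0, aR)\<close> outside the closure of \<open>E\<close> and a closest point \<open>x\<close> of that closure.
  The ball \<open>B = B(z, \<rho>)\<close>, \<open>\<rho> = |z - x|\<close>, touches \<open>E\<close> from outside at \<open>x\<close>, so the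
  curvature at \<open>x\<close> is at most \<open>M R\<^sup>-\<^sup>s\<close>. Split the curvature integral at \<open>x\<close> into the parts
  over \<open>B\<close>, over its reflection \<open>B'\<close> through \<open>x\<close>, and over the rest \<open>D\<close>. Reflecting \<open>B'\<close>
  onto \<open>B\<close> turns the first two into the integral of a nonnegative function, so their principal
  value is a monotone limit and is at least its value at \<open>\<epsilon> = \<rho>/2\<close>, which is \<open>\<ge> c \<rho>\<^sup>-\<^sup>s\<close>
  thanks to a ball of radius \<open>\<rho>/4\<close> inside \<open>B\<close>. Near \<open>x\<close> the region \<open>D\<close> lies in the cusp
  \<open>|(y - x) \<bullet> e| \<le> |y - x|\<^sup>2/(2\<rho>)\<close>, on which the kernel is integrable because \<open>s < 1\<close>.
  Only points of \<open>E\<close> contribute negatively, so for small \<open>a\<close> and large \<open>l\<close> the curvature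
  bound forces \<open>|E \<inter> B(x, l\<rho>)| \<ge> \<eta> \<rho>\<^sup>d\<close>. A Vitali covering of \<open>B(0, aR)\<close> minus the closure
  of \<open>E\<close> by the balls \<open>B(z, (l + 1)\<rho>)\<close> bounds its measure by a multiple of \<open>|E \<inter> B(0, R)|\<close>;
  since the boundary of \<open>E\<close> is null, the rest of \<open>B(0, aR)\<close> lies in \<open>E\<close> up to a null set.
\<close>

lemma dyadic_interval_exists:
  fixes q :: real assumes "1 \<le> q"
  shows "\<exists>k::nat. 2^k \<le> q \<and> q < 2^Suc k"
proof -
  obtain n :: nat where n: "q < 2^n"
    using real_arch_pow[of 2 q] by auto
  define k where "k = (LEAST n. q < 2^n)"
  have kq: "q < 2^k" unfolding k_def by (rule LeastI[of _ n]) (rule n)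
  have kmin: "\<And>m. m < k \<Longrightarrow> \<not> q < 2^m" unfolding k_def using not_less_Least by blast
  show ?thesis
  proof (cases k)
    case 0 then show ?thesis using kq assms by simp
  next
    case (Suc j)
    then have "2^j \<le> q" using kmin[of j] by simp
    then show ?thesis using kq Suc by blast
  qed
qed

lemma sets_lebesgueI_borel: "A \<in> sets borel \<Longrightarrow> A \<in> sets lebesgue"
  by simp

lemma borel_measurable_lebesgueI_borel: "f \<in> borel_measurable borel \<Longrightarrow> f \<in> borel_measurable lebesgue"
  by (rule measurable_completion) simp

lemma borel_measurable_norm_diff_powr[measurable]:
  "(\<lambda>y. ennreal (norm ((x::'a::euclidean_space) - y) powr q)) \<in> borel_measurable lebesgue"
  by (rule borel_measurable_lebesgueI_borel) measurable

lemma sets_lebesgue_ball[measurable]: "ball c r \<in> sets lebesgue"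
  by simp

lemma sets_lebesgue_outside_ball[measurable]:
  "{y. r \<le> norm ((x::'a::euclidean_space) - y)} \<in> sets lebesgue"
  by (rule sets_lebesgueI_borel) measurable

lemma emeasure_Int_ball_eq_measure:
  "emeasure lebesgue (A \<inter> ball (c::'a::euclidean_space) r) = ennreal (measure lebesgue (A \<inter> ball c r))"
proof -
  have "emeasure lebesgue (A \<inter> ball c r) \<le> emeasure lebesgue (cball c \<bar>r\<bar>)"
    by (intro emeasure_mono) auto
  also have "\<dots> < \<infinity>" by (simp add: emeasure_cball)
  finally show ?thesis using emeasure_eq_ennreal_measure by (simp add: less_top)
qed

lemma nn_integral_indicator_le_cmult_emeasure:
  assumes "S \<in> sets M" and "\<And>y. y \<in> S \<Longrightarrow> f y \<le> c"
  shows "(\<integral>\<^sup>+y. indicator S y * f y \<partial>M) \<le> c * emeasure M S"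
proof -
  have "(\<integral>\<^sup>+y. indicator S y * f y \<partial>M) \<le> (\<integral>\<^sup>+y. c * indicator S y \<partial>M)"
    using assms(2) by (intro nn_integral_mono) (auto simp: indicator_def)
  also have "\<dots> = c * emeasure M S"
    using assms(1) by (simp add: nn_integral_cmult_indicator)
  finally show ?thesis .
qed

lemma nn_integral_indicator_le_Un:
  fixes f :: "'a \<Rightarrow> ennreal"
  assumes [measurable]: "S1 \<in> sets M" "S2 \<in> sets M" "f \<in> borel_measurable M"
    and "S \<subseteq> S1 \<union> S2"
  shows "(\<integral>\<^sup>+y. indicator S y * f y \<partial>M)
           \<le> (\<integral>\<^sup>+y. indicator S1 y * f y \<partial>M) + (\<integral>\<^sup>+y. indicator S2 y * f y \<partial>M)"
proof -
  have "(\<integral>\<^sup>+y. indicator S y * f y \<partial>M) \<le> (\<integral>\<^sup>+y. indicator S1 y * f y + indicator S2 y * f y \<partial>M)"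
    using assms(4) by (intro nn_integral_mono) (auto simp: indicator_def)
  also have "\<dots> = (\<integral>\<^sup>+y. indicator S1 y * f y \<partial>M) + (\<integral>\<^sup>+y. indicator S2 y * f y \<partial>M)"
    by (intro nn_integral_add) measurable
  finally show ?thesis .
qed

lemma nn_integral_indicator_le_suminf:
  fixes S :: "nat \<Rightarrow> 'a set" and f :: "'a \<Rightarrow> ennreal"
  assumes S: "\<And>k. S k \<in> sets M" and disj: "disjoint_family S" and f: "f \<in> borel_measurable M"
    and b: "\<And>k. (\<integral>\<^sup>+y. indicator (S k) y * f y \<partial>M) \<le> ennreal (b k)"
    and "summable b" "\<And>k. 0 \<le> b k" and T: "T \<subseteq> (\<Union>k. S k)"
  shows "(\<integral>\<^sup>+y. indicator T y * f y \<partial>M) \<le> ennreal (\<Sum>k. b k)"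
proof -
  have "(\<integral>\<^sup>+y. indicator T y * f y \<partial>M) \<le> (\<integral>\<^sup>+y. indicator (\<Union>k. S k) y * f y \<partial>M)"
    using T by (intro nn_integral_mono) (auto simp: indicator_def)
  also have "\<dots> = (\<integral>\<^sup>+y. (\<Sum>k. indicator (S k) y * f y) \<partial>M)"
    by (intro nn_integral_cong) (simp add: ennreal_suminf_multc suminf_indicator[OF disj])
  also have "\<dots> = (\<Sum>k. \<integral>\<^sup>+y. indicator (S k) y * f y \<partial>M)"
    using S f by (intro nn_integral_suminf) auto
  also have "\<dots> \<le> (\<Sum>k. ennreal (b k))"
    using b by (intro suminf_le) auto
  also have "\<dots> = ennreal (\<Sum>k. b k)"
    using assms(5,6) by (simp add: suminf_ennreal2)
  finally show ?thesis .
qed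

lemma nn_integral_le_imp_integrable_integral_le:
  fixes f :: "'a \<Rightarrow> real"
  assumes f: "f \<in> borel_measurable M" and nn: "\<And>y. 0 \<le> f y"
    and b: "(\<integral>\<^sup>+y. ennreal (f y) \<partial>M) \<le> ennreal c" and c: "0 \<le> c"
  shows "integrable M f" "(\<integral>y. f y \<partial>M) \<le> c"
proof -
  show "integrable M f"
    using b f nn by (intro integrableI_nonneg) (auto simp: top_unique less_top[symmetric] intro: order.strict_trans1[OF b])
  have "(\<integral>y. f y \<partial>M) = enn2real (\<integral>\<^sup>+y. ennreal (f y) \<partial>M)"
    using f nn by (intro integral_eq_nn_integral) auto
  also have "\<dots> \<le> c" using b c by (simp add: enn2real_leI)
  finally show "(\<integral>y. f y \<partial>M) \<le> c" .
qed

lemma emeasure_UN_le_cmult_disjoint_UN: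
  fixes V W :: "'i \<Rightarrow> 'a set"
  assumes C: "countable C" and V: "\<And>i. i \<in> C \<Longrightarrow> V i \<in> sets M" and W: "\<And>i. i \<in> C \<Longrightarrow> W i \<in> sets M"
    and disj: "disjoint_family_on W C"
    and le: "\<And>i. i \<in> C \<Longrightarrow> emeasure M (V i) \<le> k * emeasure M (W i)"
  shows "emeasure M (\<Union>i\<in>C. V i) \<le> k * emeasure M (\<Union>i\<in>C. W i)"
proof (cases "finite C")
  case True
  have "emeasure M (\<Union>i\<in>C. V i) \<le> (\<Sum>i\<in>C. emeasure M (V i))"
    using True V by (intro emeasure_subadditive_finite) auto
  also have "\<dots> \<le> (\<Sum>i\<in>C. k * emeasure M (W i))" using le by (intro sum_mono) auto
  also have "\<dots> = k * (\<Sum>i\<in>C. emeasure M (W i))" by (simp add: sum_distrib_left)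
  also have "(\<Sum>i\<in>C. emeasure M (W i)) = emeasure M (\<Union>i\<in>C. W i)"
    using True W disj by (intro sum_emeasure) auto
  finally show ?thesis .
next
  case False
  define g where "g = from_nat_into C"
  have bij: "bij_betw g UNIV C" unfolding g_def using C False by (rule bij_betw_from_nat_into)
  then have gC: "g n \<in> C" for n by (auto simp: bij_betw_def)
  have inj: "inj g" using bij by (auto simp: bij_betw_def)
  have CV: "(\<Union>i\<in>C. V i) = (\<Union>n. V (g n))" and CW: "(\<Union>i\<in>C. W i) = (\<Union>n. W (g n))"
    using bij by (auto simp: bij_betw_def)
  have "disjoint_family (\<lambda>n. W (g n))"
    using disj gC inj unfolding disjoint_family_on_def by (metis UNIV_I injD)
  then have sum_W: "(\<Sum>n. emeasure M (W (g n))) = emeasure M (\<Union>n. W (g n))"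
    using gC W by (intro suminf_emeasure) auto
  have "emeasure M (\<Union>n. V (g n)) \<le> (\<Sum>n. emeasure M (V (g n)))"
    using gC V by (intro emeasure_subadditive_countably) auto
  also have "\<dots> \<le> (\<Sum>n. k * emeasure M (W (g n)))" using le gC by (intro suminf_le) auto
  also have "\<dots> = k * emeasure M (\<Union>n. W (g n))" by (simp add: ennreal_suminf_cmult sum_W)
  finally show ?thesis unfolding CV CW .
qed

lemma emeasure_le_diff_closure_add_Int:
  fixes E A :: "'a::euclidean_space set"
  assumes [measurable]: "E \<in> sets lebesgue" "A \<in> sets lebesgue"
    and null: "frontier E \<in> null_sets lebesgue"
  shows "emeasure lebesgue A \<le> emeasure lebesgue (A - closure E) + emeasure lebesgue (E \<inter> A)"
proof -
  have [measurable]: "frontier E \<in> sets lebesgue" "closure E \<in> sets lebesgue"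
    using null by auto
  have "A \<subseteq> ((A - closure E) \<union> (E \<inter> A)) \<union> frontier E"
    using interior_subset[of E] by (auto simp: frontier_def)
  then have "emeasure lebesgue A \<le> emeasure lebesgue (((A - closure E) \<union> (E \<inter> A)) \<union> frontier E)"
    by (intro emeasure_mono) auto
  also have "\<dots> \<le> emeasure lebesgue ((A - closure E) \<union> (E \<inter> A)) + emeasure lebesgue (frontier E)"
    by (intro emeasure_subadditive) auto
  also have "\<dots> = emeasure lebesgue ((A - closure E) \<union> (E \<inter> A))"
    using null by auto
  also have "\<dots> \<le> emeasure lebesgue (A - closure E) + emeasure lebesgue (E \<inter> A)"
    by (intro emeasure_subadditive) auto
  finally show ?thesis .
qed

lemma reflection_eq_affine:
  "(\<lambda>y::'a::euclidean_space. t + (\<Sum>j\<in>Basis. (-1 * (y \<bullet> j)) *\<^sub>R j)) = (\<lambda>y. t - y)"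
  by (simp add: fun_eq_iff sum_negf euclidean_representation flip: scaleR_scaleR)

lemma reflection_measurable_lebesgue:
  "(\<lambda>y. t - y) \<in> lebesgue \<rightarrow>\<^sub>M (lebesgue :: 'a::euclidean_space measure)"
  using lebesgue_affine_measurable[of "\<lambda>_. -1" t] unfolding reflection_eq_affine by simp

lemma lebesgue_eq_distr_reflection:
  "lebesgue = distr lebesgue (lebesgue :: 'a::euclidean_space measure) (\<lambda>y. t - y)"
  using lebesgue_affine_euclidean[of "\<lambda>_. -1" t] unfolding reflection_eq_affine by (simp add: density_1)

lemma integral_lebesgue_reflection:
  fixes g :: "'a::euclidean_space \<Rightarrow> real"
  assumes "g \<in> borel_measurable lebesgue"
  shows "(\<integral>y. g y \<partial>lebesgue) = (\<integral>y. g (t - y) \<partial>lebesgue)"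
  by (subst lebesgue_eq_distr_reflection[of t])
    (rule integral_distr[OF reflection_measurable_lebesgue assms])

lemma integrable_lebesgue_reflection:
  fixes g :: "'a::euclidean_space \<Rightarrow> real"
  assumes "g \<in> borel_measurable lebesgue" "integrable lebesgue g"
  shows "integrable lebesgue (\<lambda>y. g (t - y))"
  using assms(2) integrable_distr_eq[OF reflection_measurable_lebesgue assms(1)]
  by (subst (asm) lebesgue_eq_distr_reflection[of t]) simp

lemma disjoint_family_incseq_shells:
  fixes a :: "nat \<Rightarrow> real" assumes "incseq a"
  shows "disjoint_family (\<lambda>k. {y. a k \<le> f y \<and> f y < a (Suc k)})"
  unfolding disjoint_family_on_def
proof (intro ballI impI)
  fix m n :: nat assume "m \<noteq> n"
  then have "a (Suc m) \<le> a n \<or> a (Suc n) \<le> a m"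
    using assms by (metis Suc_leI linorder_neqE_nat monoD)
  then show "{y. a m \<le> f y \<and> f y < a (Suc m)} \<inter> {y. a n \<le> f y \<and> f y < a (Suc n)} = {}"
    by auto
qed

lemma disjoint_family_decseq_shells:
  fixes a :: "nat \<Rightarrow> real" assumes "decseq a"
  shows "disjoint_family (\<lambda>k. {y. P y \<and> a (Suc k) < f y \<and> f y \<le> a k})"
  unfolding disjoint_family_on_def
proof (intro ballI impI)
  fix m n :: nat assume "m \<noteq> n"
  then have "a n \<le> a (Suc m) \<or> a m \<le> a (Suc n)"
    using assms by (metis Suc_leI linorder_neqE_nat antimonoD)
  then show "{y. P y \<and> a (Suc m) < f y \<and> f y \<le> a m} \<inter> {y. P y \<and> a (Suc n) < f y \<and> f y \<le> a n} = {}"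
    by auto
qed

lemma powr_mult_two_power: "0 < t \<Longrightarrow> (t * 2^k) powr u = t powr u * ((2::real) powr u)^k"
  by (simp add: powr_mult powr_power powr_realpow[symmetric] powr_powr mult.commute)

lemma powr_divide_two_power: "(t / 2^k) powr u = t powr u * ((2::real) powr (-u))^k"
proof -
  have two: "((2::real)^k) powr u = (2 powr u)^k" using powr_mult_two_power[of 1 k u] by simp
  have "(t / 2^k) powr u = t powr u / (2 powr u)^k" by (simp only: powr_divide two)
  also have "\<dots> = t powr u * ((2::real) powr (-u))^k" by (simp add: powr_minus power_inverse divide_inverse)
  finally show ?thesis .
qed

definition tail_const :: "real \<Rightarrow> nat \<Rightarrow> real" where
  "tail_const s d = unit_ball_vol d * 2^d / (1 - 2 powr (-s))"

lemma tail_const_pos: "0 < s \<Longrightarrow> 0 < tail_const s d"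
  unfolding tail_const_def by (auto intro!: divide_pos_pos simp: powr_minus_divide)

lemma nn_integral_powr_shell_le:
  fixes x :: "'a::euclidean_space"
  assumes s: "0 < s" and r: "0 < r"
  shows "(\<integral>\<^sup>+y. indicator {y. r \<le> norm (x - y) \<and> norm (x - y) < 2*r} y
            * ennreal (norm (x - y) powr (-(real DIM('a) + s))) \<partial>lebesgue)
         \<le> ennreal (unit_ball_vol DIM('a) * 2^DIM('a) * r powr (-s))"
proof -
  let ?d = "DIM('a)" and ?S = "{y. r \<le> norm (x - y) \<and> norm (x - y) < 2*r}"
  have "(\<integral>\<^sup>+y. indicator ?S y * ennreal (norm (x - y) powr (-(real ?d + s))) \<partial>lebesgue)
      \<le> ennreal (r powr (-(real ?d + s))) * emeasure lebesgue ?S"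
    using s r by (intro nn_integral_indicator_le_cmult_emeasure ennreal_leI powr_mono2')
      (auto intro!: sets_lebesgueI_borel)
  also have "\<dots> \<le> ennreal (r powr (-(real ?d + s))) * emeasure lebesgue (ball x (2*r))"
    by (intro mult_left_mono emeasure_mono) (auto simp: dist_norm)
  also have "\<dots> = ennreal (r powr (-(real ?d + s)) * (unit_ball_vol ?d * (2*r)^?d))"
    using r by (simp add: emeasure_ball ennreal_mult)
  also have "r powr (-(real ?d + s)) * (unit_ball_vol ?d * (2*r)^?d) = unit_ball_vol ?d * 2^?d * r powr (-s)"
    using r by (simp add: powr_realpow[symmetric] power_mult_distrib powr_add[symmetric] mult_ac)
  finally show ?thesis .
qed

lemma nn_integral_powr_outside_ball:
  fixes x :: "'a::euclidean_space"
  assumes s: "0 < s" and r: "0 < r"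
  shows "(\<integral>\<^sup>+y. indicator {y. r \<le> norm (x - y)} y * ennreal (norm (x - y) powr (-(real DIM('a) + s))) \<partial>lebesgue)
          \<le> ennreal (tail_const s DIM('a) * r powr (-s))"
proof -
  let ?d = "DIM('a)"
  define a where "a k = r * 2^k" for k :: nat
  define q where "q = (2::real) powr (-s)"
  define b where "b k = unit_ball_vol ?d * 2^?d * r powr (-s) * q^k" for k :: nat
  have q: "0 < q" "q < 1" unfolding q_def using s by (auto simp: powr_minus_divide)
  have "incseq a" unfolding a_def using r by (intro incseq_SucI) simp
  then have disj: "disjoint_family (\<lambda>k. {y. a k \<le> norm (x - y) \<and> norm (x - y) < a (Suc k)})"
    by (rule disjoint_family_incseq_shells)
  have shell: "(\<integral>\<^sup>+y. indicator {y. a k \<le> norm (x - y) \<and> norm (x - y) < a (Suc k)} y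
      * ennreal (norm (x - y) powr (-(real ?d + s))) \<partial>lebesgue) \<le> ennreal (b k)" for k
    using nn_integral_powr_shell_le[OF s, of "a k" x] r powr_mult_two_power[OF r, of k "-s"]
    unfolding a_def b_def q_def by (simp add: mult_ac)
  have cover: "{y. r \<le> norm (x - y)} \<subseteq> (\<Union>k. {y. a k \<le> norm (x - y) \<and> norm (x - y) < a (Suc k)})"
  proof
    fix y assume "y \<in> {y. r \<le> norm (x - y)}"
    then have "1 \<le> norm (x - y) / r" using r by auto
    then obtain k :: nat where "2^k \<le> norm (x - y) / r" "norm (x - y) / r < 2^Suc k"
      using dyadic_interval_exists by blast
    then show "y \<in> (\<Union>k. {y. a k \<le> norm (x - y) \<and> norm (x - y) < a (Suc k)})"
      using r unfolding a_def by (auto simp: field_simps)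
  qed
  have "(\<integral>\<^sup>+y. indicator {y. r \<le> norm (x - y)} y * ennreal (norm (x - y) powr (-(real ?d + s))) \<partial>lebesgue)
      \<le> ennreal (\<Sum>k. b k)"
    using q by (intro nn_integral_indicator_le_suminf[OF _ disj borel_measurable_norm_diff_powr shell _ _ cover])
      (auto intro!: sets_lebesgueI_borel summable_mult summable_geometric simp: b_def)
  also have "(\<Sum>k. b k) = tail_const s ?d * r powr (-s)"
    unfolding b_def using q
    by (simp add: suminf_mult summable_geometric suminf_geometric tail_const_def q_def)
  finally show ?thesis .
qed

lemma of_nat_mult_emeasure_le_if_disjoint_translates:
  fixes S T :: "'a::euclidean_space set" and v :: "nat \<Rightarrow> 'a"
  assumes S: "S \<in> sets lebesgue" and T: "T \<in> sets lebesgue"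
    and disj: "disjoint_family_on (\<lambda>j. (+) (v j) ` S) {..<N}"
    and sub: "\<And>j. j < N \<Longrightarrow> (+) (v j) ` S \<subseteq> T"
  shows "of_nat N * emeasure lebesgue S \<le> emeasure lebesgue T"
proof -
  have translate: "emeasure lebesgue ((+) (v j) ` S) = emeasure lebesgue S" for j
    using emeasure_lebesgue_affine[of 1 "v j" S] by (simp add: add.commute)
  have "of_nat N * emeasure lebesgue S = (\<Sum>j\<in>{..<N}. emeasure lebesgue ((+) (v j) ` S))"
    by (simp add: translate)
  also have "\<dots> = emeasure lebesgue (\<Union>j\<in>{..<N}. (+) (v j) ` S)"
    using disj lebesgue_sets_translation[OF S] by (intro sum_emeasure) auto
  also have "\<dots> \<le> emeasure lebesgue T"
    using sub T by (intro emeasure_mono) auto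
  finally show ?thesis .
qed

lemma disjoint_family_slab_translates:
  fixes e :: "'a::euclidean_space"
  assumes e: "norm e = 1" and w: "0 < w"
  shows "disjoint_family (\<lambda>j::nat. (+) ((3*w*real j) *\<^sub>R e) ` {v. norm v \<le> r \<and> \<bar>v \<bullet> e\<bar> \<le> w})"
  unfolding disjoint_family_on_def
proof (intro ballI impI)
  have far: "3*w \<le> \<bar>3*w*real m - 3*w*real n\<bar>" if "m < n" for m n :: nat
  proof -
    have "3*w*(real m + 1) \<le> 3*w*real n"
      using that w by (intro mult_left_mono) auto
    then show ?thesis by (simp add: algebra_simps)
  qed
  fix m n :: nat assume "m \<noteq> n"
  then have far_mn: "3*w \<le> \<bar>3*w*real m - 3*w*real n\<bar>"
    using far[of m n] far[of n m] by (cases "m < n") (auto simp: abs_minus_commute)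
  have ee: "e \<bullet> e = 1" using e by (simp add: norm_eq_sqrt_inner)
  show "(+) ((3*w*real m) *\<^sub>R e) ` {v. norm v \<le> r \<and> \<bar>v \<bullet> e\<bar> \<le> w}
      \<inter> (+) ((3*w*real n) *\<^sub>R e) ` {v. norm v \<le> r \<and> \<bar>v \<bullet> e\<bar> \<le> w} = {}"
  proof (rule ccontr)
    assume "\<not> ?thesis"
    then obtain a b where ab: "\<bar>a \<bullet> e\<bar> \<le> w" "\<bar>b \<bullet> e\<bar> \<le> w"
        "(3*w*real m) *\<^sub>R e + a = (3*w*real n) *\<^sub>R e + b"
      by auto
    then have "((3*w*real m) *\<^sub>R e + a) \<bullet> e = ((3*w*real n) *\<^sub>R e + b) \<bullet> e" by simp
    then have "3*w*real m - 3*w*real n = b \<bullet> e - a \<bullet> e" by (simp add: inner_add_left ee)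
    then show False using far_mn ab(1,2) w by linarith
  qed
qed

text \<open>A slab of width \<open>2w\<close> in \<open>B(0, r)\<close> has \<open>\<lfloor>r/(3w)\<rfloor> \<ge> r/(6w)\<close> disjoint translates inside
  \<open>B(0, 2r)\<close>.\<close>
lemma emeasure_slab_le:
  fixes e :: "'a::euclidean_space"
  assumes e: "norm e = 1" and w: "0 < w" and wr: "6*w \<le> r"
  shows "emeasure lebesgue {v. norm v \<le> r \<and> \<bar>v \<bullet> e\<bar> \<le> w}
          \<le> ennreal (6 * 2^DIM('a) * unit_ball_vol DIM('a) * r^DIM('a) * w / r)"
proof -
  let ?d = "DIM('a)" and ?\<omega> = "unit_ball_vol DIM('a)"
  define S where "S = {v::'a. norm v \<le> r \<and> \<bar>v \<bullet> e\<bar> \<le> w}"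
  define N where "N = nat \<lfloor>r/(3*w)\<rfloor>"
  define v where "v j = (3*w*real j) *\<^sub>R e" for j
  have r: "0 < r" using w wr by linarith
  have S[measurable]: "S \<in> sets lebesgue" unfolding S_def by (rule sets_lebesgueI_borel) measurable
  have "2 \<le> r/(3*w)" using w wr by (simp add: field_simps)
  then have "r/(3*w) - 1 \<le> real N" "real N \<le> r/(3*w)" unfolding N_def by linarith+
  then have N: "r/(6*w) \<le> real N" "3*w*real N \<le> r"
    using w wr by (simp_all add: field_simps)
  have disj: "disjoint_family_on (\<lambda>j. (+) (v j) ` S) {..<N}"
    using disjoint_family_on_mono[OF subset_UNIV disjoint_family_slab_translates[OF e w]]
    unfolding v_def S_def .
  have sub: "(+) (v j) ` S \<subseteq> ball 0 (2*r)" if "j < N" for j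
  proof
    fix y assume "y \<in> (+) (v j) ` S"
    then obtain u where u: "u \<in> S" "y = v j + u" by auto
    have "3*w*real j < 3*w*real N" using w that by simp
    then have "3*w*real j < r" using N(2) by linarith
    then have "norm (v j) < r" using e w unfolding v_def by simp
    then show "y \<in> ball 0 (2*r)" using u norm_triangle_ineq[of "v j" u] unfolding S_def by auto
  qed
  have "emeasure lebesgue S \<le> emeasure lebesgue (cball (0::'a) r)"
    by (intro emeasure_mono) (auto simp: S_def)
  also have "\<dots> < \<infinity>" using emeasure_lborel_cball_finite[of "0::'a" r] by simp
  finally have S_eq: "emeasure lebesgue S = ennreal (measure lebesgue S)"
    by (simp add: emeasure_eq_ennreal_measure less_top)
  have "of_nat N * emeasure lebesgue S \<le> emeasure lebesgue (ball (0::'a) (2*r))"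
    by (rule of_nat_mult_emeasure_le_if_disjoint_translates[OF S _ disj sub]) auto
  also have "\<dots> = ennreal (?\<omega> * (2*r)^?d)" using r by (simp add: emeasure_ball)
  finally have "ennreal (real N * measure lebesgue S) \<le> ennreal (?\<omega> * (2*r)^?d)"
    by (simp add: S_eq ennreal_of_nat_eq_real_of_nat ennreal_mult)
  then have packing: "real N * measure lebesgue S \<le> ?\<omega> * (2*r)^?d"
    using r by (simp add: ennreal_le_iff)
  have "r/(6*w) * measure lebesgue S \<le> ?\<omega> * (2*r)^?d"
    using N(1) packing by (meson measure_nonneg mult_right_mono order_trans)
  then have "measure lebesgue S \<le> 6 * 2^?d * ?\<omega> * r^?d * w / r"
    using w r by (simp add: field_simps power_mult_distrib)
  then show ?thesis unfolding S_def[symmetric] S_eq by (rule ennreal_leI)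
qed

definition cusp :: "'a::real_inner \<Rightarrow> 'a \<Rightarrow> real \<Rightarrow> real \<Rightarrow> 'a set" where
  "cusp x e \<rho> t = {y. \<bar>(y - x) \<bullet> e\<bar> \<le> (norm (y - x))^2/(2*\<rho>) \<and> 0 < norm (y - x) \<and> norm (y - x) < t}"

definition cusp_const :: "real \<Rightarrow> nat \<Rightarrow> real" where
  "cusp_const s d = 3 * unit_ball_vol d * 2^d * 2 powr (d + s) / (1 - 2 powr (s - 1))"

lemma cusp_const_pos: "s < 1 \<Longrightarrow> 0 < cusp_const s d"
  unfolding cusp_const_def by (intro divide_pos_pos mult_pos_pos) (auto simp: powr_less_one)

lemma cusp_measurable[measurable]: "cusp x e \<rho> t \<in> sets lebesgue"
  unfolding cusp_def by (rule sets_lebesgueI_borel) measurable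

lemma half_powr_neg: "((r::real)/2) powr (-p) = 2 powr p * r powr (-p)"
  using powr_divide_two_power[of r 1 "-p"] by (simp add: mult.commute)

lemma cusp_shell_bound_eq:
  fixes r \<rho> s \<omega> :: real
  assumes r: "0 < r" and rho: "0 < \<rho>"
  shows "(r/2) powr (-(real d + s)) * (6 * 2^d * \<omega> * r^d * (r^2/(2*\<rho>)) / r)
           = 3 * \<omega> * 2^d * 2 powr (real d + s) * r powr (1 - s) / \<rho>"
proof -
  have "6 * 2^d * \<omega> * r^d * (r^2/(2*\<rho>)) / r = 3 * 2^d * \<omega> * r ^ Suc d / \<rho>"
    using r rho by (simp add: power2_eq_square divide_simps)
  also have "r ^ Suc d = r powr (real d + 1)"
    using powr_realpow[OF r, of "Suc d"] by (simp only: of_nat_Suc add.commute)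
  finally have slab: "6 * 2^d * \<omega> * r^d * (r^2/(2*\<rho>)) / r = 3 * 2^d * \<omega> * r powr (real d + 1) / \<rho>" .
  have exponent: "r powr (1 - s) = r powr (-(real d + s)) * r powr (real d + 1)"
    by (simp add: powr_add[symmetric])
  show ?thesis unfolding slab half_powr_neg exponent by (simp add: ac_simps)
qed

lemma nn_integral_powr_cusp_shell_le:
  fixes x e :: "'a::euclidean_space"
  assumes e: "norm e = 1" and s: "0 < s" and rho: "0 < \<rho>" and r: "0 < r" "3*r \<le> \<rho>"
  shows "(\<integral>\<^sup>+y. indicator {y. \<bar>(y - x) \<bullet> e\<bar> \<le> (norm (y - x))^2/(2*\<rho>) \<and> r/2 < norm (y - x) \<and> norm (y - x) \<le> r} y
            * ennreal (norm (x - y) powr (-(real DIM('a) + s))) \<partial>lebesgue)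
         \<le> ennreal (3 * unit_ball_vol DIM('a) * 2^DIM('a) * 2 powr (real DIM('a) + s) * r powr (1 - s) / \<rho>)"
proof -
  let ?d = "DIM('a)" and ?\<omega> = "unit_ball_vol DIM('a)"
  let ?T = "{y. \<bar>(y - x) \<bullet> e\<bar> \<le> (norm (y - x))^2/(2*\<rho>) \<and> r/2 < norm (y - x) \<and> norm (y - x) \<le> r}"
  define w where "w = r^2/(2*\<rho>)"
  define S where "S = {v::'a. norm v \<le> r \<and> \<bar>v \<bullet> e\<bar> \<le> w}"
  have "6*w = r * (3*r/\<rho>)" unfolding w_def using rho by (simp add: power2_eq_square field_simps)
  also have "\<dots> \<le> r * 1" using r rho by (intro mult_left_mono) (auto simp: divide_le_eq)
  finally have w: "0 < w" "6*w \<le> r" unfolding w_def using r rho by auto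
  have S: "S \<in> sets lebesgue" unfolding S_def by (rule sets_lebesgueI_borel) measurable
  have sub: "?T \<subseteq> (+) x ` S"
  proof
    fix y assume y: "y \<in> ?T"
    then have "(norm (y - x))^2/(2*\<rho>) \<le> w"
      unfolding w_def using rho by (intro divide_right_mono power_mono) auto
    then have "y - x \<in> S" using y unfolding S_def by auto
    then show "y \<in> (+) x ` S" by (intro image_eqI[of _ _ "y - x"]) auto
  qed
  have "(\<integral>\<^sup>+y. indicator ?T y * ennreal (norm (x - y) powr (-(real ?d + s))) \<partial>lebesgue)
      \<le> ennreal ((r/2) powr (-(real ?d + s))) * emeasure lebesgue ?T"
    using s r by (intro nn_integral_indicator_le_cmult_emeasure ennreal_leI powr_mono2')
      (auto intro!: sets_lebesgueI_borel simp: norm_minus_commute)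
  also have "\<dots> \<le> ennreal ((r/2) powr (-(real ?d + s))) * emeasure lebesgue ((+) x ` S)"
    using sub lebesgue_sets_translation[OF S] by (intro mult_left_mono emeasure_mono) auto
  also have "\<dots> = ennreal ((r/2) powr (-(real ?d + s))) * emeasure lebesgue S"
    using emeasure_lebesgue_affine[of 1 x S] by (simp add: add.commute)
  also have "\<dots> \<le> ennreal ((r/2) powr (-(real ?d + s))) * ennreal (6 * 2^?d * ?\<omega> * r^?d * w / r)"
    unfolding S_def by (intro mult_left_mono emeasure_slab_le[OF e w]) auto
  also have "\<dots> = ennreal ((r/2) powr (-(real ?d + s)) * (6 * 2^?d * ?\<omega> * r^?d * w / r))"
    using r w by (intro ennreal_mult[symmetric]) auto
  also have "(r/2) powr (-(real ?d + s)) * (6 * 2^?d * ?\<omega> * r^?d * w / r)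
      = 3 * ?\<omega> * 2^?d * 2 powr (real ?d + s) * r powr (1 - s) / \<rho>"
    unfolding w_def by (rule cusp_shell_bound_eq[OF r(1) rho])
  finally show ?thesis .
qed

lemma nn_integral_powr_cusp_le:
  fixes x e :: "'a::euclidean_space"
  assumes e: "norm e = 1" and s: "0 < s" "s < 1" and rho: "0 < \<rho>" and t: "0 < t" "3*t \<le> \<rho>"
  shows "(\<integral>\<^sup>+y. indicator (cusp x e \<rho> t) y * ennreal (norm (x - y) powr (-(real DIM('a) + s))) \<partial>lebesgue)
         \<le> ennreal (cusp_const s DIM('a) * t powr (1 - s) / \<rho>)"
proof -
  let ?d = "DIM('a)" and ?\<omega> = "unit_ball_vol DIM('a)"
  let ?P = "\<lambda>y. \<bar>(y - x) \<bullet> e\<bar> \<le> (norm (y - x))^2/(2*\<rho>)"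
  define a where "a k = t / 2^k" for k :: nat
  define q where "q = (2::real) powr (s - 1)"
  define c where "c = 3 * ?\<omega> * 2^?d * 2 powr (real ?d + s) * t powr (1 - s) / \<rho>"
  define b where "b k = c * q^k" for k :: nat
  have q: "0 < q" "q < 1" unfolding q_def using s by (auto simp: powr_less_one)
  have "decseq a" unfolding a_def using t by (intro decseq_SucI) (simp add: divide_le_eq)
  then have disj: "disjoint_family (\<lambda>k. {y. ?P y \<and> a (Suc k) < norm (y - x) \<and> norm (y - x) \<le> a k})"
    by (rule disjoint_family_decseq_shells)
  have shell: "(\<integral>\<^sup>+y. indicator {y. ?P y \<and> a (Suc k) < norm (y - x) \<and> norm (y - x) \<le> a k} y
      * ennreal (norm (x - y) powr (-(real ?d + s))) \<partial>lebesgue) \<le> ennreal (b k)" for k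
  proof -
    have "a k \<le> t" unfolding a_def using t by (simp add: divide_le_eq)
    then have ak: "0 < a k" "3 * a k \<le> \<rho>" "a (Suc k) = a k / 2"
      using t unfolding a_def by auto
    have "a k powr (1 - s) = t powr (1 - s) * q^k"
      unfolding a_def q_def using powr_divide_two_power[of t k "1 - s"] by simp
    then show ?thesis
      using nn_integral_powr_cusp_shell_le[OF e s(1) rho ak(1,2), of x] unfolding ak(3) b_def c_def
      by (simp add: mult_ac)
  qed
  have cover: "cusp x e \<rho> t \<subseteq> (\<Union>k. {y. ?P y \<and> a (Suc k) < norm (y - x) \<and> norm (y - x) \<le> a k})"
  proof
    fix y assume y: "y \<in> cusp x e \<rho> t"
    then have ny: "0 < norm (y - x)" "1 \<le> t / norm (y - x)" by (auto simp: cusp_def)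
    then obtain k :: nat where "2^k \<le> t / norm (y - x)" "t / norm (y - x) < 2^Suc k"
      using dyadic_interval_exists by blast
    then show "y \<in> (\<Union>k. {y. ?P y \<and> a (Suc k) < norm (y - x) \<and> norm (y - x) \<le> a k})"
      using y ny unfolding a_def cusp_def by (auto simp: field_simps)
  qed
  have "(\<integral>\<^sup>+y. indicator (cusp x e \<rho> t) y * ennreal (norm (x - y) powr (-(real ?d + s))) \<partial>lebesgue)
      \<le> ennreal (\<Sum>k. b k)"
    using q rho by (intro nn_integral_indicator_le_suminf[OF _ disj borel_measurable_norm_diff_powr shell _ _ cover])
      (auto intro!: sets_lebesgueI_borel summable_mult summable_geometric simp: b_def c_def)
  also have "(\<Sum>k. b k) = c / (1 - q)"
    unfolding b_def using q by (simp add: suminf_mult summable_geometric suminf_geometric)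
  also have "\<dots> = cusp_const s ?d * t powr (1 - s) / \<rho>"
    unfolding c_def cusp_const_def q_def by simp
  finally show ?thesis .
qed

locale touching_ball =
  fixes x z :: "'a::euclidean_space" and \<rho> :: real
  assumes rho_pos: "0 < \<rho>" and dist_centre: "dist z x = \<rho>"
begin

definition "e = (1/\<rho>) *\<^sub>R (z - x)"
definition "B = ball z \<rho>"
definition "B' = ball (x + x - z) \<rho>"
definition "D = UNIV - (B \<union> B' \<union> {x})"
definition "G = ball (z - (1/4) *\<^sub>R (z - x)) (\<rho>/4)"

lemma norm_centre_diff: "norm (z - x) = \<rho>"
  using dist_centre by (simp add: dist_norm)

lemma norm_e: "norm e = 1"
  unfolding e_def using norm_centre_diff rho_pos by simp

lemma regions_measurable[measurable]: "B \<in> sets lebesgue" "B' \<in> sets lebesgue" "D \<in> sets lebesgue"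
  unfolding B_def B'_def D_def by (auto intro!: sets_lebesgueI_borel)

lemma inner_e: "(y - x) \<bullet> e = ((y - x) \<bullet> (z - x)) / \<rho>"
  unfolding e_def by (simp add: inner_commute)

lemma norm_diff_centre_sq: "(norm (z - y))^2 = \<rho>^2 - 2 * ((y - x) \<bullet> (z - x)) + (norm (y - x))^2"
proof -
  have "(norm (z - y))^2 = (norm ((z - x) - (y - x)))^2" by simp
  also have "\<dots> = (norm (z - x))^2 - 2 * ((y - x) \<bullet> (z - x)) + (norm (y - x))^2"
    by (simp add: power2_norm_eq_inner inner_diff_left inner_diff_right inner_commute algebra_simps)
  finally show ?thesis using norm_centre_diff by simp
qed

lemma norm_diff_reflected_centre_sq:
  "(norm (x + x - z - y))^2 = \<rho>^2 + 2 * ((y - x) \<bullet> (z - x)) + (norm (y - x))^2"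
proof -
  have "(norm (x + x - z - y))^2 = (norm ((z - x) + (y - x)))^2"
    by (metis add_diff_eq diff_add_eq diff_diff_eq2 norm_minus_commute)
  also have "\<dots> = (norm (z - x))^2 + 2 * ((y - x) \<bullet> (z - x)) + (norm (y - x))^2"
    by (simp add: power2_norm_eq_inner inner_add_left inner_add_right inner_commute algebra_simps)
  finally show ?thesis using norm_centre_diff by simp
qed

lemma inner_e_le_if_notin_B:
  assumes "y \<notin> B" shows "(y - x) \<bullet> e \<le> (norm (y - x))^2/(2*\<rho>)"
proof -
  have "\<rho>^2 \<le> (norm (z - y))^2"
    using assms rho_pos unfolding B_def by (intro power_mono) (auto simp: dist_norm)
  then have "2 * ((y - x) \<bullet> (z - x)) \<le> (norm (y - x))^2" using norm_diff_centre_sq[of y] by simp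
  then show ?thesis using rho_pos unfolding inner_e by (simp add: field_simps)
qed

lemma inner_e_ge_if_notin_B':
  assumes "y \<notin> B'" shows "- ((y - x) \<bullet> e) \<le> (norm (y - x))^2/(2*\<rho>)"
proof -
  have "\<rho>^2 \<le> (norm (x + x - z - y))^2"
    using assms rho_pos unfolding B'_def by (intro power_mono) (auto simp: dist_norm)
  then have "- 2 * ((y - x) \<bullet> (z - x)) \<le> (norm (y - x))^2" using norm_diff_reflected_centre_sq[of y] by simp
  then show ?thesis using rho_pos unfolding inner_e by (simp add: field_simps)
qed

lemma D_Int_ball_subset_cusp: "D \<inter> ball x t \<subseteq> cusp x e \<rho> t"
  using inner_e_le_if_notin_B inner_e_ge_if_notin_B'
  unfolding D_def cusp_def by (auto simp: abs_le_iff dist_norm norm_minus_commute)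

lemma B_B'_disjoint: "B \<inter> B' = {}"
proof (rule ccontr)
  assume "B \<inter> B' \<noteq> {}"
  then obtain y where y: "norm (z - y) < \<rho>" "norm (x + x - z - y) < \<rho>"
    unfolding B_def B'_def by (auto simp: dist_norm)
  have "(z - y) - (x + x - z - y) = 2 *\<^sub>R (z - x)" by (simp add: algebra_simps scaleR_2)
  then have "2 * \<rho> = norm ((z - y) - (x + x - z - y))" using norm_centre_diff by simp
  also have "\<dots> \<le> norm (z - y) + norm (x + x - z - y)" by (rule norm_triangle_ineq4)
  finally show False using y by linarith
qed

lemma B'_subset_ball: "B' \<subseteq> ball x (2*\<rho>)"
proof -
  have "dist (x + x - z) x = \<rho>" using norm_centre_diff by (simp add: dist_norm norm_minus_commute)
  then show ?thesis unfolding B'_def by (simp add: ball_subset_ball_iff)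
qed

lemma G_subset_B: "G \<subseteq> B"
proof -
  have "dist (z - (1/4) *\<^sub>R (z - x)) z = \<rho>/4" using norm_centre_diff by (simp add: dist_norm)
  then show ?thesis unfolding G_def B_def using rho_pos by (simp add: ball_subset_ball_iff)
qed

lemma dist_G: assumes "y \<in> G" shows "\<rho>/2 < norm (x - y)" "norm (x - y) < \<rho>"
proof -
  let ?c = "z - (1/4) *\<^sub>R (z - x)"
  have c: "norm (?c - y) < \<rho>/4" using assms unfolding G_def by (simp add: dist_norm)
  have xy: "x - y = (?c - y) - (3/4) *\<^sub>R (z - x)"
    by (simp add: algebra_simps flip: scaleR_add_left)
  have "norm ((3/4) *\<^sub>R (z - x)) = 3/4 * \<rho>" using norm_centre_diff by simp
  moreover have "norm (x - y) \<le> norm (?c - y) + norm ((3/4) *\<^sub>R (z - x))"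
    unfolding xy by (rule norm_triangle_ineq4)
  moreover have "norm ((3/4) *\<^sub>R (z - x)) - norm (?c - y) \<le> norm (x - y)"
    unfolding xy by (metis norm_minus_commute norm_triangle_ineq2)
  ultimately show "\<rho>/2 < norm (x - y)" "norm (x - y) < \<rho>"
    using c by linarith+
qed

lemma reflect_mem_B'_iff: "x + x - y \<in> B' \<longleftrightarrow> y \<in> B"
  unfolding B_def B'_def by (simp add: dist_norm algebra_simps norm_minus_commute)

lemma reflect_mem_ball_iff: "x + x - y \<in> ball x r \<longleftrightarrow> y \<in> ball x r"
  by (simp add: dist_norm algebra_simps norm_minus_commute)

end

locale kernel_setting =
  fixes K :: "'a::euclidean_space \<Rightarrow> real" and E :: "'a set" and lam Lam s :: real
  assumes s: "0 < s" "s < 1" and lam: "0 < lam" "lam \<le> Lam"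
    and K_measurable: "K \<in> borel_measurable lebesgue"
    and K_comparable: "\<And>y. y \<noteq> 0 \<Longrightarrow> lam * norm y powr (-(real DIM('a) + s)) \<le> K y
                 \<and> K y \<le> Lam * norm y powr (-(real DIM('a) + s)) \<and> K y = K (-y)"
    and E_borel: "E \<in> sets borel"
begin

definition "F x y = tchi E y * K (x - y)"
definition "\<phi> (x::'a) y = norm (x - y) powr (-(real DIM('a) + s))"

lemma E_measurable[measurable]: "E \<in> sets lebesgue"
  using E_borel by (rule sets_lebesgueI_borel)

lemma K_diff_measurable[measurable]: "(\<lambda>y. K (x - y)) \<in> borel_measurable lebesgue"
  using measurable_compose[OF reflection_measurable_lebesgue K_measurable] by (simp add: comp_def)

lemma tchi_measurable[measurable]: "tchi E \<in> borel_measurable lebesgue"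
proof -
  have "tchi E = (\<lambda>y. 1 - 2 * indicator E y)" by (auto simp: tchi_def fun_eq_iff)
  then show ?thesis by simp
qed

lemma F_measurable[measurable]: "F x \<in> borel_measurable lebesgue"
  unfolding F_def by measurable

lemma \<phi>_measurable[measurable]:
  "(\<lambda>y. ennreal (\<phi> x y)) \<in> borel_measurable lebesgue" "\<phi> x \<in> borel_measurable lebesgue"
  unfolding \<phi>_def by (rule borel_measurable_norm_diff_powr) (rule borel_measurable_lebesgueI_borel, measurable)

lemma \<phi>_nonneg: "0 \<le> \<phi> x y" unfolding \<phi>_def by simp

lemma \<phi>_le: "0 < r \<Longrightarrow> r \<le> norm (x - y) \<Longrightarrow> \<phi> x y \<le> r powr (-(real DIM('a) + s))"
  unfolding \<phi>_def using s by (intro powr_mono2') auto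

lemma kernel_diff_bounds:
  assumes "y \<noteq> x"
  shows "lam * \<phi> x y \<le> K (x - y)" "K (x - y) \<le> Lam * \<phi> x y" "0 \<le> K (x - y)" "K (y - x) = K (x - y)"
proof -
  from K_comparable[of "x - y"] assms
  show "lam * \<phi> x y \<le> K (x - y)" "K (x - y) \<le> Lam * \<phi> x y" "K (y - x) = K (x - y)"
    unfolding \<phi>_def by auto
  then show "0 \<le> K (x - y)" using lam \<phi>_nonneg[of x y] by (meson mult_nonneg_nonneg less_imp_le order_trans)
qed

lemma abs_F_le: "y \<noteq> x \<Longrightarrow> \<bar>F x y\<bar> \<le> Lam * \<phi> x y"
  using kernel_diff_bounds[of y x] by (auto simp: F_def tchi_def)

lemma F_ge: "y \<noteq> x \<Longrightarrow> - Lam * (indicator E y * \<phi> x y) \<le> F x y"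
  using kernel_diff_bounds[of y x] \<phi>_nonneg[of x y] lam by (auto simp: F_def tchi_def indicator_def)

lemma nn_integral_\<phi>_outside_ball:
  assumes "0 < r"
  shows "(\<integral>\<^sup>+y. indicator {y. r \<le> norm (x - y)} y * ennreal (\<phi> x y) \<partial>lebesgue)
           \<le> ennreal (tail_const s DIM('a) * r powr (-s))"
  unfolding \<phi>_def by (rule nn_integral_powr_outside_ball[OF s(1) assms])

lemma nn_integral_\<phi>_cusp:
  assumes "norm e = 1" "0 < \<rho>" "0 < t" "3*t \<le> \<rho>"
  shows "(\<integral>\<^sup>+y. indicator (cusp x e \<rho> t) y * ennreal (\<phi> x y) \<partial>lebesgue)
           \<le> ennreal (cusp_const s DIM('a) * t powr (1 - s) / \<rho>)"
  unfolding \<phi>_def by (rule nn_integral_powr_cusp_le[OF assms(1) s assms(2-4)])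

lemma nn_integral_\<phi>_finite_outside_ball:
  assumes "S \<in> sets lebesgue" "0 < r" "S \<subseteq> {y. r \<le> norm (x - y)}"
  shows "(\<integral>\<^sup>+y. indicator S y * ennreal (\<phi> x y) \<partial>lebesgue) < \<infinity>"
proof -
  have "(\<integral>\<^sup>+y. indicator S y * ennreal (\<phi> x y) \<partial>lebesgue)
      \<le> (\<integral>\<^sup>+y. indicator {y. r \<le> norm (x - y)} y * ennreal (\<phi> x y) \<partial>lebesgue)"
    using assms(3) by (intro nn_integral_mono) (auto simp: indicator_def)
  also have "\<dots> \<le> ennreal (tail_const s DIM('a) * r powr (-s))"
    using assms(2) by (rule nn_integral_\<phi>_outside_ball)
  also have "\<dots> < \<infinity>" by simp
  finally show ?thesis .
qed

lemma nn_integral_\<phi>_E_far_le: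
  assumes S: "S \<in> sets lebesgue" and r: "0 < r"
    and far: "S \<subseteq> {y. r \<le> norm (x - y)}" and near: "S \<subseteq> ball x l"
  shows "(\<integral>\<^sup>+y. indicator (S \<inter> E) y * ennreal (\<phi> x y) \<partial>lebesgue)
           \<le> ennreal (r powr (-(real DIM('a) + s)) * measure lebesgue (E \<inter> ball x l))"
proof -
  have "(\<integral>\<^sup>+y. indicator (S \<inter> E) y * ennreal (\<phi> x y) \<partial>lebesgue)
      \<le> ennreal (r powr (-(real DIM('a) + s))) * emeasure lebesgue (S \<inter> E)"
    using S far r by (intro nn_integral_indicator_le_cmult_emeasure ennreal_leI \<phi>_le) auto
  also have "\<dots> \<le> ennreal (r powr (-(real DIM('a) + s))) * emeasure lebesgue (E \<inter> ball x l)"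
    using near by (intro mult_left_mono emeasure_mono) auto
  finally show ?thesis by (simp add: emeasure_Int_ball_eq_measure ennreal_mult)
qed

lemma integrable_indicator_F:
  assumes S[measurable]: "S \<in> sets lebesgue" and xS: "x \<notin> S"
    and fin: "(\<integral>\<^sup>+y. indicator S y * ennreal (\<phi> x y) \<partial>lebesgue) < \<infinity>"
  shows "integrable lebesgue (\<lambda>y. indicator S y * F x y)"
proof (rule integrableI_bounded)
  show "(\<lambda>y. indicator S y * F x y) \<in> borel_measurable lebesgue" by measurable
  have "(\<integral>\<^sup>+y. ennreal (norm (indicator S y * F x y)) \<partial>lebesgue)
      \<le> (\<integral>\<^sup>+y. ennreal Lam * (indicator S y * ennreal (\<phi> x y)) \<partial>lebesgue)"
  proof (intro nn_integral_mono)
    fix y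
    show "ennreal (norm (indicator S y * F x y)) \<le> ennreal Lam * (indicator S y * ennreal (\<phi> x y))"
      using xS abs_F_le[of y x] lam \<phi>_nonneg[of x y]
      by (cases "y \<in> S") (auto simp: ennreal_mult[symmetric] intro!: ennreal_leI)
  qed
  also have "\<dots> = ennreal Lam * (\<integral>\<^sup>+y. indicator S y * ennreal (\<phi> x y) \<partial>lebesgue)"
    by (intro nn_integral_cmult) measurable
  also have "\<dots> < \<infinity>" using fin by (simp add: ennreal_mult_less_top)
  finally show "(\<integral>\<^sup>+y. ennreal (norm (indicator S y * F x y)) \<partial>lebesgue) < \<infinity>" .
qed

lemma integrable_F_outside_ball:
  assumes "S \<in> sets lebesgue" "0 < r" "S \<subseteq> UNIV - ball x r"
  shows "integrable lebesgue (\<lambda>y. indicator S y * F x y)"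
proof (rule integrable_indicator_F[OF assms(1)])
  show "x \<notin> S" using assms by auto
  show "(\<integral>\<^sup>+y. indicator S y * ennreal (\<phi> x y) \<partial>lebesgue) < \<infinity>"
    using assms by (intro nn_integral_\<phi>_finite_outside_ball[of S r]) (auto simp: dist_norm)
qed

text \<open>Only the points of \<open>E\<close> contribute negatively to the curvature integral.\<close>
lemma integral_indicator_F_ge:
  assumes S: "S \<in> sets lebesgue" and xS: "x \<notin> S"
    and fin: "(\<integral>\<^sup>+y. indicator S y * ennreal (\<phi> x y) \<partial>lebesgue) < \<infinity>"
    and b: "(\<integral>\<^sup>+y. indicator (S \<inter> E) y * ennreal (\<phi> x y) \<partial>lebesgue) \<le> ennreal c" and c: "0 \<le> c"
  shows "- Lam * c \<le> (\<integral>y. indicator S y * F x y \<partial>lebesgue)"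
proof -
  have b': "(\<integral>\<^sup>+y. ennreal (indicator (S \<inter> E) y * \<phi> x y) \<partial>lebesgue) \<le> ennreal c"
    using b by (simp add: ennreal_mult' ennreal_indicator)
  have m: "(\<lambda>y. indicator (S \<inter> E) y * \<phi> x y) \<in> borel_measurable lebesgue" using S by measurable
  have nn: "\<And>y. 0 \<le> indicator (S \<inter> E) y * \<phi> x y" by (simp add: \<phi>_nonneg)
  note E_part = nn_integral_le_imp_integrable_integral_le[OF m nn b' c]
  have "- Lam * c \<le> - Lam * (\<integral>y. indicator (S \<inter> E) y * \<phi> x y \<partial>lebesgue)"
    using E_part(2) lam \<phi>_nonneg by simp
  also have "\<dots> = (\<integral>y. - Lam * (indicator (S \<inter> E) y * \<phi> x y) \<partial>lebesgue)" by simp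
  also have "\<dots> \<le> (\<integral>y. indicator S y * F x y \<partial>lebesgue)"
  proof (rule integral_mono)
    show "integrable lebesgue (\<lambda>y. - Lam * (indicator (S \<inter> E) y * \<phi> x y))"
      using E_part(1) \<phi>_nonneg by simp
    show "integrable lebesgue (\<lambda>y. indicator S y * F x y)" by (rule integrable_indicator_F[OF S xS fin])
    show "- Lam * (indicator (S \<inter> E) y * \<phi> x y) \<le> indicator S y * F x y" for y
    proof (cases "y \<in> S")
      case True
      then have "y \<noteq> x" using xS by auto
      then show ?thesis using F_ge[of y x] True by (simp add: indicator_def)
    qed (simp add: indicator_def)
  qed
  finally show ?thesis .
qed

end

locale exterior_touching_ball = kernel_setting K E lam Lam s + touching_ball x z \<rho>
  for K :: "'a::euclidean_space \<Rightarrow> real" and E lam Lam s and x z :: 'a and \<rho> +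
  assumes ball_outside_E: "ball z \<rho> \<inter> E = {}"
begin

lemma B_outside_E: "y \<in> B \<Longrightarrow> y \<notin> E"
  using ball_outside_E unfolding B_def by auto

lemma nn_integral_\<phi>_D_finite:
  assumes S: "S \<in> sets lebesgue" and SD: "S \<subseteq> D"
  shows "(\<integral>\<^sup>+y. indicator S y * ennreal (\<phi> x y) \<partial>lebesgue) < \<infinity>"
proof -
  have "S \<subseteq> cusp x e \<rho> (\<rho>/3) \<union> {y. \<rho>/3 \<le> norm (x - y)}"
    using SD D_Int_ball_subset_cusp[of "\<rho>/3"] by (force simp: dist_norm)
  then have "(\<integral>\<^sup>+y. indicator S y * ennreal (\<phi> x y) \<partial>lebesgue)
      \<le> (\<integral>\<^sup>+y. indicator (cusp x e \<rho> (\<rho>/3)) y * ennreal (\<phi> x y) \<partial>lebesgue)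
        + (\<integral>\<^sup>+y. indicator {y. \<rho>/3 \<le> norm (x - y)} y * ennreal (\<phi> x y) \<partial>lebesgue)"
    by (intro nn_integral_indicator_le_Un) (auto intro!: sets_lebesgueI_borel)
  also have "\<dots> \<le> ennreal (cusp_const s DIM('a) * (\<rho>/3) powr (1 - s) / \<rho>)
                   + ennreal (tail_const s DIM('a) * (\<rho>/3) powr (-s))"
    using rho_pos by (intro add_mono nn_integral_\<phi>_cusp nn_integral_\<phi>_outside_ball norm_e) auto
  also have "\<dots> < \<infinity>" by simp
  finally show ?thesis .
qed

lemma integrable_F_D:
  assumes "S \<in> sets lebesgue" "S \<subseteq> D"
  shows "integrable lebesgue (\<lambda>y. indicator S y * F x y)"
  using assms by (intro integrable_indicator_F nn_integral_\<phi>_D_finite) (auto simp: D_def)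

definition "curv_B \<epsilon> = (\<integral>y. indicator (B - ball x \<epsilon>) y * F x y \<partial>lebesgue)"
definition "curv_B' \<epsilon> = (\<integral>y. indicator (B' - ball x \<epsilon>) y * F x y \<partial>lebesgue)"
definition "curv_D \<epsilon> = (\<integral>y. indicator (D - ball x \<epsilon>) y * F x y \<partial>lebesgue)"
definition "curv_D0 = (\<integral>y. indicator D y * F x y \<partial>lebesgue)"

lemma trunc_curv_split:
  assumes \<epsilon>: "0 < \<epsilon>"
  shows "trunc_curv K E x \<epsilon> = (curv_B \<epsilon> + curv_B' \<epsilon>) + curv_D \<epsilon>"
proof -
  have i1: "integrable lebesgue (\<lambda>y. indicator (B - ball x \<epsilon>) y * F x y)"
    and i2: "integrable lebesgue (\<lambda>y. indicator (B' - ball x \<epsilon>) y * F x y)"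
    and i3: "integrable lebesgue (\<lambda>y. indicator (D - ball x \<epsilon>) y * F x y)"
    using \<epsilon> by (auto intro!: integrable_F_outside_ball)
  have "indicator (UNIV - ball x \<epsilon>) y * (tchi E y * K (x - y))
      = (indicator (B - ball x \<epsilon>) y * F x y + indicator (B' - ball x \<epsilon>) y * F x y)
        + indicator (D - ball x \<epsilon>) y * F x y" for y
    using B_B'_disjoint \<epsilon>
    by (cases "y \<in> ball x \<epsilon>"; cases "y \<in> B"; cases "y \<in> B'") (auto simp: F_def D_def indicator_def)
  then have "trunc_curv K E x \<epsilon> = (\<integral>y. (indicator (B - ball x \<epsilon>) y * F x y
      + indicator (B' - ball x \<epsilon>) y * F x y) + indicator (D - ball x \<epsilon>) y * F x y \<partial>lebesgue)"
    unfolding trunc_curv_def by (simp only:)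
  also have "\<dots> = (curv_B \<epsilon> + curv_B' \<epsilon>) + curv_D \<epsilon>"
    unfolding curv_B_def curv_B'_def curv_D_def
    by (simp add: Bochner_Integration.integral_add Bochner_Integration.integrable_add i1 i2 i3)
  finally show ?thesis .
qed

lemma curv_D0_split:
  assumes "0 < \<epsilon>"
  shows "curv_D0 = curv_D \<epsilon> + (\<integral>y. indicator (D \<inter> ball x \<epsilon>) y * F x y \<partial>lebesgue)"
proof -
  have "indicator D y * F x y = indicator (D - ball x \<epsilon>) y * F x y + indicator (D \<inter> ball x \<epsilon>) y * F x y" for y
    by (auto simp: indicator_def)
  then show ?thesis unfolding curv_D0_def curv_D_def
    by (simp only:) (intro Bochner_Integration.integral_add integrable_F_D; auto)
qed

definition "sym_integrand \<epsilon> y = indicator (B - ball x \<epsilon>) y * ((1 + tchi E (x + x - y)) * K (x - y))"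

text \<open>Reflection through \<open>x\<close> maps \<open>B'\<close> onto \<open>B\<close>, where \<open>tchi E = 1\<close>.\<close>
lemma curv_B_add_curv_B'_eq:
  assumes \<epsilon>: "0 < \<epsilon>"
  shows "curv_B \<epsilon> + curv_B' \<epsilon> = (\<integral>y. sym_integrand \<epsilon> y \<partial>lebesgue)"
    and "integrable lebesgue (sym_integrand \<epsilon>)"
proof -
  let ?g = "\<lambda>y. indicator (B - ball x \<epsilon>) y * (tchi E (x + x - y) * K (x - y))"
  have i1: "integrable lebesgue (\<lambda>y. indicator (B - ball x \<epsilon>) y * F x y)"
    and i2: "integrable lebesgue (\<lambda>y. indicator (B' - ball x \<epsilon>) y * F x y)"
    using \<epsilon> by (auto intro!: integrable_F_outside_ball)
  have m2: "(\<lambda>y. indicator (B' - ball x \<epsilon>) y * F x y) \<in> borel_measurable lebesgue" by measurable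
  have reflect: "indicator (B' - ball x \<epsilon>) (x + x - y) * F x (x + x - y) = ?g y" for y
  proof (cases "y \<in> B - ball x \<epsilon>")
    case True
    then have "K (y - x) = K (x - y)" using \<epsilon> by (intro kernel_diff_bounds(4)) auto
    then show ?thesis using True reflect_mem_B'_iff[of y] reflect_mem_ball_iff[of y \<epsilon>]
      by (simp add: F_def algebra_simps)
  qed (use reflect_mem_B'_iff[of y] reflect_mem_ball_iff[of y \<epsilon>] in \<open>auto simp: indicator_def\<close>)
  have B': "curv_B' \<epsilon> = (\<integral>y. ?g y \<partial>lebesgue)" "integrable lebesgue ?g"
    unfolding curv_B'_def using integral_lebesgue_reflection[OF m2, of "x + x"]
      integrable_lebesgue_reflection[OF m2 i2, of "x + x"] by (simp_all only: reflect)
  have sum: "indicator (B - ball x \<epsilon>) y * F x y + ?g y = sym_integrand \<epsilon> y" for y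
    using B_outside_E[of y] by (cases "y \<in> B") (auto simp: sym_integrand_def F_def tchi_def algebra_simps)
  show "integrable lebesgue (sym_integrand \<epsilon>)"
    using Bochner_Integration.integrable_add[OF i1 B'(2)] by (simp only: sum)
  show "curv_B \<epsilon> + curv_B' \<epsilon> = (\<integral>y. sym_integrand \<epsilon> y \<partial>lebesgue)"
    unfolding curv_B_def B'(1) Bochner_Integration.integral_add[OF i1 B'(2), symmetric] sum ..
qed

lemma curv_B_add_curv_B'_antimono:
  assumes "0 < \<epsilon>\<^sub>1" "\<epsilon>\<^sub>1 \<le> \<epsilon>\<^sub>2"
  shows "curv_B \<epsilon>\<^sub>2 + curv_B' \<epsilon>\<^sub>2 \<le> curv_B \<epsilon>\<^sub>1 + curv_B' \<epsilon>\<^sub>1"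
proof -
  have pointwise: "sym_integrand \<epsilon>\<^sub>2 y \<le> sym_integrand \<epsilon>\<^sub>1 y" for y
  proof (cases "y \<in> B - ball x \<epsilon>\<^sub>1")
    case True
    then have "y \<noteq> x" using assms by auto
    then have "0 \<le> (1 + tchi E (x + x - y)) * K (x - y)"
      using kernel_diff_bounds(3)[of y x] by (simp add: tchi_def)
    then show ?thesis using True by (auto simp: sym_integrand_def indicator_def)
  qed (use assms in \<open>auto simp: sym_integrand_def indicator_def\<close>)
  have "0 < \<epsilon>\<^sub>2" using assms by simp
  then show ?thesis
    unfolding curv_B_add_curv_B'_eq(1)[OF assms(1)] curv_B_add_curv_B'_eq(1)[OF \<open>0 < \<epsilon>\<^sub>2\<close>]
    using assms(1) pointwise by (intro integral_mono curv_B_add_curv_B'_eq(2))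
qed

lemma abs_curv_D_diff_le:
  assumes \<epsilon>: "0 < \<epsilon>" "3*\<epsilon> \<le> \<rho>"
  shows "\<bar>curv_D \<epsilon> - curv_D0\<bar> \<le> Lam * (cusp_const s DIM('a) * \<epsilon> powr (1 - s) / \<rho>)"
proof -
  let ?c = "cusp_const s DIM('a) * \<epsilon> powr (1 - s) / \<rho>"
  have cusp_nn: "(\<integral>\<^sup>+y. ennreal (indicator (cusp x e \<rho> \<epsilon>) y * \<phi> x y) \<partial>lebesgue) \<le> ennreal ?c"
    using nn_integral_\<phi>_cusp[OF norm_e rho_pos \<epsilon>] by (simp add: ennreal_mult' ennreal_indicator)
  have c: "0 \<le> ?c"
    using cusp_const_pos[OF s(2), of "DIM('a)"] rho_pos by (intro divide_nonneg_pos mult_nonneg_nonneg) auto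
  have m: "(\<lambda>y. indicator (cusp x e \<rho> \<epsilon>) y * \<phi> x y) \<in> borel_measurable lebesgue" by measurable
  have nn: "\<And>y. 0 \<le> indicator (cusp x e \<rho> \<epsilon>) y * \<phi> x y" by (simp add: \<phi>_nonneg)
  note cusp_part = nn_integral_le_imp_integrable_integral_le[OF m nn cusp_nn c]
  have "\<bar>curv_D \<epsilon> - curv_D0\<bar> = \<bar>\<integral>y. indicator (D \<inter> ball x \<epsilon>) y * F x y \<partial>lebesgue\<bar>"
    using curv_D0_split[OF \<epsilon>(1)] by simp
  also have "\<dots> \<le> (\<integral>y. \<bar>indicator (D \<inter> ball x \<epsilon>) y * F x y\<bar> \<partial>lebesgue)" by (rule integral_abs_bound)
  also have "\<dots> \<le> (\<integral>y. Lam * (indicator (cusp x e \<rho> \<epsilon>) y * \<phi> x y) \<partial>lebesgue)"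
  proof (rule integral_mono)
    show "integrable lebesgue (\<lambda>y. \<bar>indicator (D \<inter> ball x \<epsilon>) y * F x y\<bar>)"
      by (simp add: integrable_F_D)
    show "integrable lebesgue (\<lambda>y. Lam * (indicator (cusp x e \<rho> \<epsilon>) y * \<phi> x y))"
      using cusp_part(1) by (simp add: \<phi>_nonneg)
    show "\<bar>indicator (D \<inter> ball x \<epsilon>) y * F x y\<bar> \<le> Lam * (indicator (cusp x e \<rho> \<epsilon>) y * \<phi> x y)" for y
      using D_Int_ball_subset_cusp[of \<epsilon>] abs_F_le[of y x] lam \<phi>_nonneg[of x y]
      by (cases "y \<in> D \<inter> ball x \<epsilon>") (auto simp: D_def indicator_def)
  qed
  also have "\<dots> = Lam * (\<integral>y. indicator (cusp x e \<rho> \<epsilon>) y * \<phi> x y \<partial>lebesgue)" by simp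
  also have "\<dots> \<le> Lam * ?c"
    using cusp_part(2) lam by (intro mult_left_mono) auto
  finally show ?thesis .
qed

end

definition inner_const :: "real \<Rightarrow> nat \<Rightarrow> real" where
  "inner_const lam d = lam * unit_ball_vol d / 4^d"

context exterior_touching_ball
begin

lemma curv_D_tendsto: "(curv_D \<longlongrightarrow> curv_D0) (at_right 0)"
proof (rule LIM_zero_cancel)
  let ?C = "Lam * (cusp_const s DIM('a) / \<rho>)"
  have "((\<lambda>\<epsilon>::real. \<epsilon> powr (1 - s)) \<longlongrightarrow> 0) (at_right 0)"
    using s eventually_at_right_less[of "0::real"]
    by (intro tendsto_zero_powrI[where b="1-s"] tendsto_ident_at) (auto elim: eventually_mono)
  moreover have "\<forall>\<^sub>F \<epsilon> in at_right 0. 0 < \<epsilon> \<and> 3*\<epsilon> \<le> \<rho>"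
    unfolding eventually_at_right[OF zero_less_one]
    using rho_pos by (intro exI[of _ "min 1 (\<rho>/3)"]) auto
  then have "\<forall>\<^sub>F \<epsilon> in at_right 0. norm (curv_D \<epsilon> - curv_D0) \<le> norm (\<epsilon> powr (1 - s)) * ?C"
    by (rule eventually_mono) (use abs_curv_D_diff_le in \<open>auto simp: field_simps\<close>)
  ultimately show "((\<lambda>\<epsilon>. curv_D \<epsilon> - curv_D0) \<longlongrightarrow> 0) (at_right 0)"
    by (rule tendsto_0_le)
qed

definition "curv_sym_sup = (SUP \<epsilon>\<in>{0<..}. ereal (curv_B \<epsilon> + curv_B' \<epsilon>))"

lemma curv_sym_tendsto: "((\<lambda>\<epsilon>. ereal (curv_B \<epsilon> + curv_B' \<epsilon>)) \<longlongrightarrow> curv_sym_sup) (at_right 0)"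
proof (rule order_tendstoI)
  fix a assume "a < curv_sym_sup"
  then obtain \<epsilon>\<^sub>0 where \<epsilon>\<^sub>0: "0 < \<epsilon>\<^sub>0" "a < ereal (curv_B \<epsilon>\<^sub>0 + curv_B' \<epsilon>\<^sub>0)"
    unfolding curv_sym_sup_def by (auto simp: less_SUP_iff)
  have "a < ereal (curv_B \<epsilon> + curv_B' \<epsilon>)" if "0 < \<epsilon>" "\<epsilon> < \<epsilon>\<^sub>0" for \<epsilon>
    using \<epsilon>\<^sub>0(2) curv_B_add_curv_B'_antimono[of \<epsilon> \<epsilon>\<^sub>0] that by (simp add: order.strict_trans2)
  then show "\<forall>\<^sub>F \<epsilon> in at_right 0. a < ereal (curv_B \<epsilon> + curv_B' \<epsilon>)"
    unfolding eventually_at_right[OF zero_less_one] using \<epsilon>\<^sub>0(1) by blast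
next
  fix a assume a: "curv_sym_sup < a"
  have "ereal (curv_B \<epsilon> + curv_B' \<epsilon>) < a" if "0 < \<epsilon>" for \<epsilon>
  proof -
    have "ereal (curv_B \<epsilon> + curv_B' \<epsilon>) \<le> curv_sym_sup"
      unfolding curv_sym_sup_def using that by (intro SUP_upper) auto
    then show ?thesis using a by simp
  qed
  then show "\<forall>\<^sub>F \<epsilon> in at_right 0. ereal (curv_B \<epsilon> + curv_B' \<epsilon>) < a"
    unfolding eventually_at_right[OF zero_less_one] by (intro exI[of _ 1]) auto
qed

lemma nonlocal_curv_eq: "nonlocal_curv K E x = curv_sym_sup + ereal curv_D0"
proof -
  have "ereal (curv_B 1 + curv_B' 1) \<le> curv_sym_sup"
    unfolding curv_sym_sup_def by (intro SUP_upper) auto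
  then have "curv_sym_sup \<noteq> -\<infinity>" by auto
  then have "((\<lambda>\<epsilon>. ereal (curv_B \<epsilon> + curv_B' \<epsilon>) + ereal (curv_D \<epsilon>)) \<longlongrightarrow> curv_sym_sup + ereal curv_D0) (at_right 0)"
    by (intro tendsto_add_ereal_nonneg curv_sym_tendsto) (auto intro: curv_D_tendsto)
  moreover have "\<forall>\<^sub>F \<epsilon> in at_right 0. ereal (curv_B \<epsilon> + curv_B' \<epsilon>) + ereal (curv_D \<epsilon>) = ereal (trunc_curv K E x \<epsilon>)"
    unfolding eventually_at_right[OF zero_less_one] by (intro exI[of _ 1]) (auto simp: trunc_curv_split)
  ultimately have "((\<lambda>\<epsilon>. ereal (trunc_curv K E x \<epsilon>)) \<longlongrightarrow> curv_sym_sup + ereal curv_D0) (at_right 0)"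
    using tendsto_cong by fastforce
  then show ?thesis unfolding nonlocal_curv_def by (intro tendsto_Lim) auto
qed

lemma curv_B_half_ge: "inner_const lam DIM('a) * \<rho> powr (-s) \<le> curv_B (\<rho>/2)"
proof -
  let ?d = "DIM('a)" and ?c = "lam * \<rho> powr (-(real DIM('a) + s))"
  have "integrable lebesgue (indicator G :: 'a \<Rightarrow> real)"
    unfolding G_def using emeasure_lborel_ball_finite[of "z - (1/4) *\<^sub>R (z - x)" "\<rho>/4"]
    by (intro integrable_real_indicator) auto
  then have iG: "integrable lebesgue (\<lambda>y. ?c * indicator G y)" by simp
  have "?c * measure lebesgue G = ?c * (unit_ball_vol ?d * (\<rho>/4)^?d)"
    unfolding G_def using rho_pos by (simp add: content_ball)
  also have "\<dots> = inner_const lam ?d * \<rho> powr (-s)"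
    using rho_pos by (simp add: inner_const_def power_divide powr_realpow[symmetric] powr_add[symmetric])
  finally have G_integral: "(\<integral>y. ?c * indicator G y \<partial>lebesgue) = inner_const lam ?d * \<rho> powr (-s)"
    by simp
  have pointwise: "?c * indicator G y \<le> indicator (B - ball x (\<rho>/2)) y * F x y" for y
  proof (cases "y \<in> G")
    case True
    then have y: "y \<in> B - ball x (\<rho>/2)" "y \<noteq> x" "\<rho> \<le> norm (x - y) \<or> True"
      using G_subset_B dist_G[OF True] by (auto simp: dist_norm)
    have "\<rho> powr (-(real ?d + s)) \<le> \<phi> x y"
      unfolding \<phi>_def using dist_G[OF True] s rho_pos by (intro powr_mono2') auto
    then have "?c \<le> K (x - y)"
      using lam kernel_diff_bounds(1)[OF y(2)] by (meson mult_left_mono less_imp_le order_trans)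
    then show ?thesis using True y B_outside_E[of y] by (simp add: F_def tchi_def)
  next
    case False
    then show ?thesis
      using B_outside_E[of y] kernel_diff_bounds(3)[of y x] rho_pos
      by (cases "y = x") (auto simp: F_def tchi_def indicator_def)
  qed
  have iB: "integrable lebesgue (\<lambda>y. indicator (B - ball x (\<rho>/2)) y * F x y)"
    by (rule integrable_F_outside_ball[of _ "\<rho>/2"]) (use rho_pos in auto)
  have "(\<integral>y. ?c * indicator G y \<partial>lebesgue) \<le> curv_B (\<rho>/2)"
    unfolding curv_B_def using iG iB pointwise by (rule integral_mono)
  then show ?thesis unfolding G_integral .
qed

lemma curv_B'_half_ge:
  assumes "2 \<le> l"
  shows "- Lam * ((\<rho>/2) powr (-(real DIM('a) + s)) * measure lebesgue (E \<inter> ball x (l*\<rho>))) \<le> curv_B' (\<rho>/2)"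
proof -
  let ?S = "B' - ball x (\<rho>/2)"
  have "2*\<rho> \<le> l*\<rho>" using assms rho_pos by (intro mult_right_mono) auto
  then have near: "?S \<subseteq> ball x (l*\<rho>)" using B'_subset_ball subset_ball[of "2*\<rho>" "l*\<rho>" x] by auto
  have "(\<integral>\<^sup>+y. indicator (?S \<inter> E) y * ennreal (\<phi> x y) \<partial>lebesgue)
      \<le> ennreal ((\<rho>/2) powr (-(real DIM('a) + s)) * measure lebesgue (E \<inter> ball x (l*\<rho>)))"
    using rho_pos near by (intro nn_integral_\<phi>_E_far_le) (auto simp: dist_norm)
  then show ?thesis unfolding curv_B'_def using rho_pos
    by (intro integral_indicator_F_ge nn_integral_\<phi>_finite_outside_ball[of _ "\<rho>/2"]) (auto simp: dist_norm)
qed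

lemma curv_D0_ge:
  assumes \<theta>: "0 < \<theta>" "3*\<theta> \<le> 1" and l: "2 \<le> l"
  shows "- Lam * (cusp_const s DIM('a) * (\<theta>*\<rho>) powr (1 - s) / \<rho>
                  + (\<theta>*\<rho>) powr (-(real DIM('a) + s)) * measure lebesgue (E \<inter> ball x (l*\<rho>))
                  + tail_const s DIM('a) * (l*\<rho>) powr (-s)) \<le> curv_D0"
proof -
  let ?m = "measure lebesgue (E \<inter> ball x (l*\<rho>))"
  let ?cusp = "cusp_const s DIM('a) * (\<theta>*\<rho>) powr (1 - s) / \<rho>"
  and ?mid = "(\<theta>*\<rho>) powr (-(real DIM('a) + s)) * ?m"
  and ?tail = "tail_const s DIM('a) * (l*\<rho>) powr (-s)"
  let ?S = "E \<inter> ball x (l*\<rho>) \<inter> {y. \<theta>*\<rho> \<le> norm (x - y)}"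
  have \<theta>\<rho>: "0 < \<theta>*\<rho>" "3*(\<theta>*\<rho>) \<le> \<rho>" using \<theta> rho_pos by auto
  have l\<rho>: "0 < l*\<rho>" using l rho_pos by simp
  have cover: "D \<inter> E \<subseteq> cusp x e \<rho> (\<theta>*\<rho>) \<union> (?S \<union> {y. l*\<rho> \<le> norm (x - y)})"
    using D_Int_ball_subset_cusp[of "\<theta>*\<rho>"] by (force simp: dist_norm)
  have "(\<integral>\<^sup>+y. indicator (D \<inter> E) y * ennreal (\<phi> x y) \<partial>lebesgue)
     \<le> (\<integral>\<^sup>+y. indicator (cusp x e \<rho> (\<theta>*\<rho>)) y * ennreal (\<phi> x y) \<partial>lebesgue)
       + (\<integral>\<^sup>+y. indicator (?S \<union> {y. l*\<rho> \<le> norm (x - y)}) y * ennreal (\<phi> x y) \<partial>lebesgue)"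
    by (rule nn_integral_indicator_le_Un[OF _ _ _ cover]) measurable
  also have "\<dots> \<le> (\<integral>\<^sup>+y. indicator (cusp x e \<rho> (\<theta>*\<rho>)) y * ennreal (\<phi> x y) \<partial>lebesgue)
       + ((\<integral>\<^sup>+y. indicator ?S y * ennreal (\<phi> x y) \<partial>lebesgue)
       + (\<integral>\<^sup>+y. indicator {y. l*\<rho> \<le> norm (x - y)} y * ennreal (\<phi> x y) \<partial>lebesgue))"
    by (intro add_left_mono nn_integral_indicator_le_Un[OF _ _ _ subset_refl]) measurable
  also have "\<dots> \<le> ennreal ?cusp + (ennreal ?mid + ennreal ?tail)"
  proof (intro add_mono nn_integral_\<phi>_cusp nn_integral_\<phi>_outside_ball norm_e rho_pos \<theta>\<rho> l\<rho>)
    have "?S = (ball x (l*\<rho>) \<inter> {y. \<theta>*\<rho> \<le> norm (x - y)}) \<inter> E" by auto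
    also have "(\<integral>\<^sup>+y. indicator \<dots> y * ennreal (\<phi> x y) \<partial>lebesgue) \<le> ennreal ?mid"
      using \<theta>\<rho> by (intro nn_integral_\<phi>_E_far_le) auto
    finally show "(\<integral>\<^sup>+y. indicator ?S y * ennreal (\<phi> x y) \<partial>lebesgue) \<le> ennreal ?mid" .
  qed
  also have "\<dots> = ennreal (?cusp + ?mid + ?tail)"
    using cusp_const_pos[OF s(2), of "DIM('a)"] tail_const_pos[OF s(1), of "DIM('a)"] rho_pos
    by (simp add: ennreal_plus add.assoc)
  finally show ?thesis
    unfolding curv_D0_def using cusp_const_pos[OF s(2), of "DIM('a)"] tail_const_pos[OF s(1), of "DIM('a)"] rho_pos
    by (intro integral_indicator_F_ge nn_integral_\<phi>_D_finite regions_measurable) (auto simp: D_def)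
qed

lemma nonlocal_curv_ge:
  assumes \<theta>: "0 < \<theta>" "3*\<theta> \<le> 1" and l: "2 \<le> l"
  shows "ereal (\<rho> powr (-s) * (inner_const lam DIM('a) - Lam * cusp_const s DIM('a) * \<theta> powr (1 - s)
                                 - Lam * tail_const s DIM('a) * l powr (-s))
           - Lam * \<rho> powr (-(real DIM('a) + s)) * (2 powr (real DIM('a) + s) + \<theta> powr (-(real DIM('a) + s)))
               * measure lebesgue (E \<inter> ball x (l*\<rho>)))
         \<le> nonlocal_curv K E x"
proof -
  let ?p = "real DIM('a) + s"
  have "\<rho> powr (1 - s) = \<rho> * \<rho> powr (-s)" using rho_pos by (simp add: powr_diff powr_minus divide_inverse)
  then have cusp: "cusp_const s DIM('a) * (\<theta>*\<rho>) powr (1 - s) / \<rho> = cusp_const s DIM('a) * \<theta> powr (1 - s) * \<rho> powr (-s)"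
    using \<theta> rho_pos by (simp add: powr_mult)
  have theta: "(\<theta>*\<rho>) powr (-?p) = \<theta> powr (-?p) * \<rho> powr (-?p)" using \<theta> rho_pos by (simp add: powr_mult)
  have tail: "(l*\<rho>) powr (-s) = l powr (-s) * \<rho> powr (-s)" using l rho_pos by (simp add: powr_mult)
  have "ereal (curv_B (\<rho>/2) + curv_B' (\<rho>/2)) \<le> curv_sym_sup"
    unfolding curv_sym_sup_def using rho_pos by (intro SUP_upper) auto
  then have "ereal (curv_B (\<rho>/2) + curv_B' (\<rho>/2) + curv_D0) \<le> nonlocal_curv K E x"
    unfolding nonlocal_curv_eq by (metis add_right_mono plus_ereal.simps(1))
  moreover have "\<rho> powr (-s) * (inner_const lam DIM('a) - Lam * cusp_const s DIM('a) * \<theta> powr (1 - s)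
                                 - Lam * tail_const s DIM('a) * l powr (-s))
           - Lam * \<rho> powr (-?p) * (2 powr ?p + \<theta> powr (-?p)) * measure lebesgue (E \<inter> ball x (l*\<rho>))
      \<le> curv_B (\<rho>/2) + curv_B' (\<rho>/2) + curv_D0"
    using curv_B_half_ge curv_B'_half_ge[OF l] curv_D0_ge[OF \<theta> l]
    unfolding half_powr_neg cusp theta tail by (simp add: algebra_simps)
  ultimately show ?thesis by (meson ereal_less_eq(3) order_trans)
qed

lemma measure_E_near_touching_point:
  assumes \<theta>: "0 < \<theta>" "3*\<theta> \<le> 1" "Lam * cusp_const s DIM('a) * \<theta> powr (1 - s) \<le> inner_const lam DIM('a) / 4"
    and l: "2 \<le> l" "Lam * tail_const s DIM('a) * l powr (-s) \<le> inner_const lam DIM('a) / 4"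
    and curv: "nonlocal_curv K E x \<le> ereal (inner_const lam DIM('a) / 4 * \<rho> powr (-s))"
  shows "inner_const lam DIM('a) / (4 * (Lam * (2 powr (real DIM('a) + s) + \<theta> powr (-(real DIM('a) + s)))))
           * \<rho>^DIM('a) \<le> measure lebesgue (E \<inter> ball x (l*\<rho>))"
proof -
  let ?p = "real DIM('a) + s" and ?c = "inner_const lam DIM('a)"
  let ?C = "Lam * (2 powr ?p + \<theta> powr (-?p))" and ?m = "measure lebesgue (E \<inter> ball x (l*\<rho>))"
  have C: "0 < ?C" using lam by (simp add: add_pos_nonneg)
  have "\<rho> powr (-s) * (?c - Lam * cusp_const s DIM('a) * \<theta> powr (1 - s) - Lam * tail_const s DIM('a) * l powr (-s))
          - ?C * \<rho> powr (-?p) * ?m \<le> ?c / 4 * \<rho> powr (-s)"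
    using order_trans[OF nonlocal_curv_ge[OF \<theta>(1,2) l(1)] curv] by (simp add: mult_ac)
  moreover have "\<rho> powr (-s) * (?c/2) \<le> \<rho> powr (-s) * (?c - Lam * cusp_const s DIM('a) * \<theta> powr (1 - s)
                                          - Lam * tail_const s DIM('a) * l powr (-s))"
    using \<theta>(3) l(2) by (intro mult_left_mono) auto
  ultimately have "?c/4 * \<rho> powr (-s) \<le> ?C * \<rho> powr (-?p) * ?m"
    by (simp add: algebra_simps)
  moreover have "\<rho> powr (-s) = \<rho>^DIM('a) * \<rho> powr (-?p)"
    using rho_pos by (simp add: powr_realpow[symmetric] powr_add[symmetric])
  ultimately have "(?c/4 * \<rho>^DIM('a)) * \<rho> powr (-?p) \<le> (?C * ?m) * \<rho> powr (-?p)"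
    by (simp add: mult_ac)
  then have "?c/4 * \<rho>^DIM('a) \<le> ?C * ?m"
    using rho_pos by (simp add: mult_le_cancel_right_pos)
  then show ?thesis using C by (simp add: field_simps)
qed

end

lemma closest_point_touching_ball:
  fixes E :: "'a::euclidean_space set"
  assumes ne: "closure E \<noteq> {}" and z: "z \<notin> closure E"
  obtains x \<rho> where "0 < \<rho>" "dist z x = \<rho>" "ball z \<rho> \<inter> E = {}" "x \<in> frontier E"
    "ext_touching_ball E x" "\<And>y. y \<in> closure E \<Longrightarrow> \<rho> \<le> dist z y"
proof -
  obtain x where x: "x \<in> closure E" "\<And>y. y \<in> closure E \<Longrightarrow> dist z x \<le> dist z y"
    using distance_attains_inf[OF closed_closure ne, of z] by blast
  define \<rho> where "\<rho> = dist z x"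
  have rho: "0 < \<rho>" unfolding \<rho>_def using x(1) z by auto
  have BE: "ball z \<rho> \<inter> E = {}"
    using x(2) closure_subset[of E] unfolding \<rho>_def by fastforce
  have "x \<in> closure (ball z \<rho>)" using rho unfolding \<rho>_def by (simp add: closure_ball)
  moreover have "closure (ball z \<rho>) \<subseteq> closure (- E)" using BE by (intro closure_mono) auto
  ultimately have "x \<in> frontier E" using x(1) by (auto simp: frontier_def closure_complement)
  moreover have "ext_touching_ball E x"
    unfolding ext_touching_ball_def using rho BE unfolding \<rho>_def
    by (intro exI[of _ z] exI[of _ \<rho>]) (auto simp: frontier_ball \<rho>_def)
  ultimately show ?thesis using that[OF rho _ BE] x(2) unfolding \<rho>_def by blast
qed

lemma min_root_powr_le:
  fixes X A q :: real assumes "0 < X" "0 < A" "0 < q"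
  shows "(min A (X powr (1/q))) powr q \<le> X"
proof -
  have "(min A (X powr (1/q))) powr q \<le> (X powr (1/q)) powr q"
    using assms by (intro powr_mono2) auto
  also have "\<dots> = X" using assms by (simp add: powr_powr)
  finally show ?thesis .
qed

lemma max_root_powr_neg_le:
  fixes Y A s :: real assumes "0 < Y" "0 < A" "0 < s"
  shows "(max A (Y powr (1/s))) powr (-s) \<le> 1/Y"
proof -
  have "(max A (Y powr (1/s))) powr (-s) \<le> (Y powr (1/s)) powr (-s)"
    using assms by (intro powr_mono2') auto
  also have "\<dots> = 1/Y" using assms by (simp add: powr_powr powr_minus_divide)
  finally show ?thesis .
qed

text \<open>The cusp scale \<open>\<theta>\<close>, the tail radius \<open>l\<close> and the relative radius \<open>a\<close> of the inner ball
  make the cusp term, the tail term and the curvature bound each at most a quarter of the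
  interior contribution \<open>inner_const lam d * \<rho> powr -s\<close>.\<close>
lemma density_parameters_exist:
  fixes s lam Lam M :: real and d :: nat
  assumes s: "0 < s" "s < 1" and lam: "0 < lam" "lam \<le> Lam" and M: "0 \<le> M"
  obtains \<theta> l a where "0 < \<theta>" "3*\<theta> \<le> 1" "Lam * cusp_const s d * \<theta> powr (1 - s) \<le> inner_const lam d / 4"
    "2 \<le> l" "Lam * tail_const s d * l powr (-s) \<le> inner_const lam d / 4"
    "0 < a" "(l + 2) * a \<le> 1" "M * a powr s \<le> inner_const lam d / 4"
proof -
  define c where "c = inner_const lam d"
  have c: "0 < c" unfolding c_def inner_const_def using lam by simp
  have Lam: "0 < Lam" using lam by simp
  have Cc: "0 < cusp_const s d" and Tc: "0 < tail_const s d"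
    using cusp_const_pos tail_const_pos s by auto
  define \<theta> where "\<theta> = min (1/3) ((c / (4 * Lam * cusp_const s d)) powr (1 / (1 - s)))"
  define l where "l = max 2 ((4 * Lam * tail_const s d / c) powr (1/s))"
  define a where "a = min (1 / (l + 2)) ((c / (4 * M + 1)) powr (1/s))"
  have "\<theta> powr (1 - s) \<le> c / (4 * Lam * cusp_const s d)"
    unfolding \<theta>_def using c Lam Cc s by (intro min_root_powr_le) auto
  then have \<theta>: "Lam * cusp_const s d * \<theta> powr (1 - s) \<le> c/4"
    using Lam Cc by (simp add: field_simps mult_left_mono)
  have "l powr (-s) \<le> 1 / (4 * Lam * tail_const s d / c)"
    unfolding l_def using c Lam Tc s by (intro max_root_powr_neg_le) auto
  then have l: "Lam * tail_const s d * l powr (-s) \<le> c/4"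
    using Lam Tc c by (simp add: field_simps mult_left_mono)
  have l2: "2 \<le> l" unfolding l_def by simp
  have "a powr s \<le> c / (4 * M + 1)"
    unfolding a_def using c M s l2 by (intro min_root_powr_le) auto
  then have "M * a powr s \<le> M * (c / (4 * M + 1))" using M by (intro mult_left_mono) auto
  also have "\<dots> \<le> c/4" using M c by (simp add: field_simps)
  finally have a: "M * a powr s \<le> c/4" .
  have "a \<le> 1 / (l + 2)" unfolding a_def by simp
  then have "(l + 2) * a \<le> 1" using l2 by (simp add: field_simps)
  moreover have "0 < \<theta>" "3*\<theta> \<le> 1" "0 < a" using c Lam Cc l2 M unfolding \<theta>_def a_def by auto
  ultimately show ?thesis using that \<theta> l l2 a unfolding c_def by blast
qed

lemma emeasure_le_by_Vitali_covering:
  fixes U E W :: "'a::euclidean_space set"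
  assumes E: "E \<in> sets lebesgue" and W: "W \<in> sets lebesgue" and \<eta>: "0 < \<eta>"
    and local_density: "\<And>z. z \<in> U \<Longrightarrow> \<exists>r>0. r \<le> r\<^sub>0 \<and> ball z r \<subseteq> W
                                           \<and> \<eta> * r^DIM('a) \<le> measure lebesgue (E \<inter> ball z r)"
  shows "emeasure lebesgue U \<le> ennreal (5^DIM('a) * unit_ball_vol DIM('a) / \<eta>) * emeasure lebesgue (E \<inter> W)"
proof -
  let ?d = "DIM('a)" and ?\<kappa> = "5^DIM('a) * unit_ball_vol DIM('a) / \<eta>"
  obtain r where r: "\<And>z. z \<in> U \<Longrightarrow> 0 < r z \<and> r z \<le> r\<^sub>0 \<and> ball z (r z) \<subseteq> W
                                    \<and> \<eta> * (r z)^?d \<le> measure lebesgue (E \<inter> ball z (r z))"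
    using local_density by metis
  have cover: "U \<subseteq> (\<Union>z\<in>U. ball z (r z))" using r by force
  have radii: "\<And>z. z \<in> U \<Longrightarrow> 0 < r z \<and> r z \<le> r\<^sub>0" using r by blast
  obtain C where C: "countable C" "C \<subseteq> U"
      "pairwise (\<lambda>i j. disjnt (ball i (r i)) (ball j (r j))) C" "U \<subseteq> (\<Union>i\<in>C. ball i (5 * r i))"
    using Vitali_covering_lemma_balls[OF cover radii] by blast
  have "emeasure lebesgue U \<le> emeasure lebesgue (\<Union>i\<in>C. ball i (5 * r i))"
    using C(4) by (intro emeasure_mono) (auto intro!: sets_lebesgueI_borel borel_open)
  also have "\<dots> \<le> ennreal ?\<kappa> * emeasure lebesgue (\<Union>i\<in>C. E \<inter> ball i (r i))"
  proof (rule emeasure_UN_le_cmult_disjoint_UN[OF C(1)])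
    show "disjoint_family_on (\<lambda>i. E \<inter> ball i (r i)) C"
      using C(3) unfolding disjoint_family_on_def pairwise_def disjnt_def by blast
    fix i assume "i \<in> C"
    then have ri: "0 < r i" "\<eta> * (r i)^?d \<le> measure lebesgue (E \<inter> ball i (r i))" using C(2) r by auto
    show "ball i (5 * r i) \<in> sets lebesgue" "E \<inter> ball i (r i) \<in> sets lebesgue" using E by auto
    have "unit_ball_vol ?d * (5 * r i)^?d = ?\<kappa> * (\<eta> * (r i)^?d)"
      using \<eta> by (simp add: power_mult_distrib)
    also have "\<dots> \<le> ?\<kappa> * measure lebesgue (E \<inter> ball i (r i))"
      using ri \<eta> by (intro mult_left_mono) auto
    finally show "emeasure lebesgue (ball i (5 * r i)) \<le> ennreal ?\<kappa> * emeasure lebesgue (E \<inter> ball i (r i))"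
      using ri \<eta> by (simp add: emeasure_ball emeasure_Int_ball_eq_measure ennreal_mult[symmetric] ennreal_leI)
  qed
  also have "\<dots> \<le> ennreal ?\<kappa> * emeasure lebesgue (E \<inter> W)"
    using C(2) r E W by (intro mult_left_mono emeasure_mono) auto
  finally show ?thesis .
qed

lemma mult_powr_neg_le_of_le:
  fixes a R \<rho> M s c :: real
  assumes "0 < a" "0 < R" "0 < \<rho>" "\<rho> \<le> a*R" "0 \<le> M" "M * a powr s \<le> c" "0 < s"
  shows "M * R powr (-s) \<le> c * \<rho> powr (-s)"
proof -
  have "R powr (-s) = a powr s * (a*R) powr (-s)"
    using assms by (simp add: powr_mult powr_minus field_simps)
  then have "M * R powr (-s) = (M * a powr s) * (a*R) powr (-s)" by simp
  also have "\<dots> \<le> c * (a*R) powr (-s)" using assms by (intro mult_right_mono) auto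
  also have "\<dots> \<le> c * \<rho> powr (-s)"
  proof (intro mult_left_mono)
    show "(a*R) powr (-s) \<le> \<rho> powr (-s)" using assms by (intro powr_mono2') auto
    show "0 \<le> c" using assms by (meson order_trans mult_nonneg_nonneg powr_ge_zero)
  qed
  finally show ?thesis .
qed

lemma ball_around_exterior_point:
  fixes x z :: "'a::euclidean_space"
  assumes z: "norm z < a*R" and x: "dist z x \<le> norm z"
    and l: "2 \<le> l" and a: "0 < a" "(l + 2) * a \<le> 1" and R: "0 < R"
  shows "norm x < R/2" "ball z ((l + 1) * dist z x) \<subseteq> ball 0 R"
proof -
  have "4*a \<le> (l + 2)*a" using l a by (intro mult_right_mono) auto
  then have "4*a*R \<le> 1*R" using a(2) R mult_right_mono[of "4*a" 1 R] by simp
  then show "norm x < R/2"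
    using norm_triangle_ineq[of z "x - z"] x z by (simp add: dist_norm norm_minus_commute)
  have "norm z + (l + 1) * dist z x \<le> a*R + (l + 1)*(a*R)"
    using z x l by (intro add_mono mult_left_mono) auto
  also have "\<dots> = ((l + 2)*a)*R" by (simp add: algebra_simps)
  also have "\<dots> \<le> R" using a(2) R by simp
  finally show "ball z ((l + 1) * dist z x) \<subseteq> ball 0 R" by (simp add: ball_subset_ball_iff)
qed

context kernel_setting
begin

lemma local_density_at_exterior_point:
  assumes R: "0 < R" and E0: "0 \<in> frontier E" and M: "0 \<le> M"
    and visc: "visc_curv_le K E (ball 0 (R/2)) (M * R powr (-s))"
    and \<theta>: "0 < \<theta>" "3*\<theta> \<le> 1" "Lam * cusp_const s DIM('a) * \<theta> powr (1 - s) \<le> inner_const lam DIM('a) / 4"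
    and l: "2 \<le> l" "Lam * tail_const s DIM('a) * l powr (-s) \<le> inner_const lam DIM('a) / 4"
    and a: "0 < a" "(l + 2) * a \<le> 1" "M * a powr s \<le> inner_const lam DIM('a) / 4"
    and z: "z \<in> ball 0 (a*R) - closure E"
  defines "\<eta> \<equiv> inner_const lam DIM('a) / (4 * (Lam * (2 powr (real DIM('a) + s) + \<theta> powr (-(real DIM('a) + s)))))"
  shows "\<exists>r>0. r \<le> (l + 1) * (a*R) \<and> ball z r \<subseteq> ball 0 R
           \<and> \<eta> / (l + 1)^DIM('a) * r^DIM('a) \<le> measure lebesgue (E \<inter> ball z r)"
proof -
  have "0 \<in> closure E" using E0 by (simp add: frontier_def)
  then obtain x \<rho> where x\<rho>: "0 < \<rho>" "dist z x = \<rho>" "ball z \<rho> \<inter> E = {}" "x \<in> frontier E"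
      "ext_touching_ball E x" "\<rho> \<le> norm z"
    using closest_point_touching_ball[of E z] z by (metis dist_0_norm dist_commute empty_iff DiffD2)
  interpret exterior_touching_ball K E lam Lam s x z \<rho>
    using x\<rho> by unfold_locales auto
  have \<rho>: "\<rho> < a*R" using x\<rho>(6) z by simp
  note geometry = ball_around_exterior_point[of z a R x l, unfolded x\<rho>(2)]
  have "norm x < R/2" using geometry(1) x\<rho>(6) z l a R by simp
  then have "nonlocal_curv K E x \<le> ereal (M * R powr (-s))"
    using visc x\<rho>(4,5) unfolding visc_curv_le_def by auto
  also have "M * R powr (-s) \<le> inner_const lam DIM('a) / 4 * \<rho> powr (-s)"
    using mult_powr_neg_le_of_le[OF a(1) R x\<rho>(1) less_imp_le[OF \<rho>] M a(3) s(1)] .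
  finally have "\<eta> * \<rho>^DIM('a) \<le> measure lebesgue (E \<inter> ball x (l*\<rho>))"
    unfolding \<eta>_def by (intro measure_E_near_touching_point \<theta> l) auto
  also have "\<dots> \<le> measure lebesgue (E \<inter> ball z ((l + 1)*\<rho>))"
  proof -
    have "ball x (l*\<rho>) \<subseteq> ball z ((l + 1)*\<rho>)"
      using x\<rho>(2) by (simp add: ball_subset_ball_iff dist_commute algebra_simps)
    then have "emeasure lebesgue (E \<inter> ball x (l*\<rho>)) \<le> emeasure lebesgue (E \<inter> ball z ((l + 1)*\<rho>))"
      by (intro emeasure_mono) auto
    then show ?thesis by (simp add: emeasure_Int_ball_eq_measure)
  qed
  finally have "\<eta> / (l + 1)^DIM('a) * ((l + 1)*\<rho>)^DIM('a) \<le> measure lebesgue (E \<inter> ball z ((l + 1)*\<rho>))"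
    using l by (simp add: power_mult_distrib)
  moreover have "ball z ((l + 1)*\<rho>) \<subseteq> ball 0 R" using geometry(2) x\<rho>(6) z l a R by simp
  ultimately show ?thesis
    using x\<rho>(1) \<rho> l by (intro exI[of _ "(l + 1)*\<rho>"]) (auto intro: mult_left_mono)
qed

lemma density_estimate:
  assumes R: "0 < R" and null: "frontier E \<in> null_sets lebesgue" and E0: "0 \<in> frontier E" and M: "0 \<le> M"
    and visc: "visc_curv_le K E (ball 0 (R/2)) (M * R powr (-s))"
    and \<theta>: "0 < \<theta>" "3*\<theta> \<le> 1" "Lam * cusp_const s DIM('a) * \<theta> powr (1 - s) \<le> inner_const lam DIM('a) / 4"
    and l: "2 \<le> l" "Lam * tail_const s DIM('a) * l powr (-s) \<le> inner_const lam DIM('a) / 4"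
    and a: "0 < a" "(l + 2) * a \<le> 1" "M * a powr s \<le> inner_const lam DIM('a) / 4"
  defines "\<eta> \<equiv> inner_const lam DIM('a) / (4 * (Lam * (2 powr (real DIM('a) + s) + \<theta> powr (-(real DIM('a) + s)))))"
  shows "a^DIM('a) / (5^DIM('a) * unit_ball_vol DIM('a) * (l + 1)^DIM('a) / \<eta> + 1) * measure lebesgue (ball (0::'a) R)
           \<le> measure lebesgue (E \<inter> ball 0 R)"
proof -
  let ?d = "DIM('a)" and ?\<omega> = "unit_ball_vol DIM('a)" and ?m = "measure lebesgue (E \<inter> ball 0 R)"
  define \<kappa> where "\<kappa> = 5^?d * ?\<omega> * (l + 1)^?d / \<eta>"
  have \<eta>: "0 < \<eta>" unfolding \<eta>_def inner_const_def using lam by (simp add: add_pos_nonneg)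
  then have \<kappa>: "0 \<le> \<kappa>" unfolding \<kappa>_def using l by simp
  have "0 < \<eta> / (l + 1)^?d" using \<eta> l by simp
  from emeasure_le_by_Vitali_covering[where U = "ball 0 (a*R) - closure E", OF E_measurable
      sets_lebesgue_ball this local_density_at_exterior_point[OF R E0 M visc \<theta> l a, folded \<eta>_def]]
  have "emeasure lebesgue (ball 0 (a*R) - closure E)
      \<le> ennreal (5^?d * ?\<omega> / (\<eta> / (l + 1)^?d)) * emeasure lebesgue (E \<inter> ball 0 R)"
    by simp
  also have "5^?d * ?\<omega> / (\<eta> / (l + 1)^?d) = \<kappa>" unfolding \<kappa>_def by simp
  finally have outside: "emeasure lebesgue (ball 0 (a*R) - closure E) \<le> ennreal \<kappa> * ennreal ?m"
    by (simp add: emeasure_Int_ball_eq_measure)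
  have "1*a \<le> (l + 2)*a" using l a by (intro mult_right_mono) auto
  then have "a \<le> 1" using a(2) by linarith
  then have "a*R \<le> 1*R" using R mult_right_mono[of a 1 R] by simp
  then have inside: "emeasure lebesgue (E \<inter> ball 0 (a*R)) \<le> ennreal ?m"
    unfolding emeasure_Int_ball_eq_measure[symmetric] by (intro emeasure_mono) auto
  have "emeasure lebesgue (ball (0::'a) (a*R)) \<le> emeasure lebesgue (ball 0 (a*R) - closure E) + emeasure lebesgue (E \<inter> ball 0 (a*R))"
    by (rule emeasure_le_diff_closure_add_Int[OF E_measurable sets_lebesgue_ball null])
  also have "\<dots> \<le> ennreal \<kappa> * ennreal ?m + ennreal ?m" using outside inside by (rule add_mono)
  also have "\<dots> = ennreal ((\<kappa> + 1) * ?m)"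
    using \<kappa> by (simp add: distrib_right ennreal_plus ennreal_mult)
  finally have "?\<omega> * (a*R)^?d \<le> (\<kappa> + 1) * ?m"
    using a R \<kappa> by (simp add: emeasure_ball ennreal_le_iff)
  then have "a^?d * (?\<omega> * R^?d) \<le> (\<kappa> + 1) * ?m" by (simp add: power_mult_distrib mult_ac)
  then show ?thesis using R \<kappa> unfolding \<kappa>_def[symmetric] by (simp add: content_ball field_simps)
qed

end

theorem theorem1p2:
  fixes s lam Lam M :: real
  assumes "0 < s" "s < 1" "0 < lam" "lam \<le> Lam" "0 \<le> M"
  shows "\<exists>\<delta>>0. \<forall>(R::real) (K::'a::euclidean_space \<Rightarrow> real) (E::'a set).
     R > 0
     \<and> K \<in> borel_measurable lebesgue
     \<and> (\<forall>y. y \<noteq> 0 \<longrightarrow> lam * norm y powr (- (real DIM('a) + s)) \<le> K y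
                      \<and> K y \<le> Lam * norm y powr (- (real DIM('a) + s))
                      \<and> K y = K (- y))
     \<and> E \<in> sets borel
     \<and> frontier E \<in> null_sets lebesgue
     \<and> 0 \<in> frontier E
     \<and> visc_curv_le K E (ball 0 (R / 2)) (M * R powr (- s))
     \<longrightarrow> measure lebesgue (E \<inter> ball 0 R) \<ge> \<delta> * measure lebesgue (ball (0::'a) R)"
proof -
  let ?d = "DIM('a)" and ?p = "real DIM('a) + s"
  obtain \<theta> l a where params:
    "0 < \<theta>" "3*\<theta> \<le> 1" "Lam * cusp_const s ?d * \<theta> powr (1 - s) \<le> inner_const lam ?d / 4"
    "2 \<le> l" "Lam * tail_const s ?d * l powr (-s) \<le> inner_const lam ?d / 4"
    "0 < a" "(l + 2) * a \<le> 1" "M * a powr s \<le> inner_const lam ?d / 4"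
    using density_parameters_exist[OF assms] by blast
  define \<eta> where "\<eta> = inner_const lam ?d / (4 * (Lam * (2 powr ?p + \<theta> powr (-?p))))"
  define \<delta> where "\<delta> = a^?d / (5^?d * unit_ball_vol ?d * (l + 1)^?d / \<eta> + 1)"
  have "0 < \<eta>" unfolding \<eta>_def inner_const_def using assms by (simp add: add_pos_nonneg)
  then have "0 < \<delta>" unfolding \<delta>_def using params by (simp add: add_pos_nonneg)
  moreover have "\<delta> * measure lebesgue (ball (0::'a) R) \<le> measure lebesgue (E \<inter> ball 0 R)"
    if "R > 0" "K \<in> borel_measurable lebesgue"
      "\<forall>y. y \<noteq> 0 \<longrightarrow> lam * norm y powr (-?p) \<le> K y \<and> K y \<le> Lam * norm y powr (-?p) \<and> K y = K (- y)"
      "E \<in> sets borel" "frontier E \<in> null_sets lebesgue" "0 \<in> frontier E"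
      "visc_curv_le K E (ball 0 (R / 2)) (M * R powr (- s))"
    for R and K :: "'a \<Rightarrow> real" and E
  proof -
    have "\<And>y. y \<noteq> 0 \<Longrightarrow> lam * norm y powr (-?p) \<le> K y \<and> K y \<le> Lam * norm y powr (-?p) \<and> K y = K (- y)"
      using that(3) by blast
    then interpret kernel_setting K E lam Lam s
      by (rule kernel_setting.intro[OF assms(1-4) that(2) _ that(4)])
    show ?thesis
      unfolding \<delta>_def \<eta>_def by (rule density_estimate[OF that(1,5,6) assms(5) that(7) params])
  qed
  ultimately show ?thesis by blast
qed

end
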